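(* In the finite-sum setting, run Algorithm LCSVRG with $\gamma,\beta$ such that $\beta\in(0,2\gamma-L_0)$ and $\tilde L:=\frac{2\gamma-\beta-L_0}{2}-\frac{L_0^2(T-1)}{2\beta b}>0$, with $b\ge2T$, and suppose there is $B>0$ with $\|\lambda^{k+1}\|\le B$ for all $k$ and all realizations, where $\lambda^{k+1}$ are Lagrange multipliers of the subproblems. Let $K=r_0T+j_0$ with $r_0\ge0$, $0\le j_0<T$, and let $\{\alpha_k\}$ be nonnegative, nondecreasing and constant on each epoch, i.e. $\alpha_{rT+j}=\alpha_{rT}$ for $j=1,\dots,T-1$. With $D=\sqrt{(\psi_0(x^0)-\psi_0^* )/L_0}$, $$\sum_{k=0}^K\alpha_k\mathbb{E}\|\partial_x\mathcal{L}(x^{k+1},\lambda^{k+1})\|_-^2\le8\tilde L^{-1}L_0(\gamma+L_0+B\|L\|)^2D^2\alpha_{r_0T},$$ $$\sum_{k=0}^K\alpha_k\mathbb{E}\langle\lambda^{k+1},|\psi(x^{k+1})-\eta|\rangle\le B\sum_{k=0}^K\alpha_k\|\eta-\eta^k\|+B\tilde L^{-1}\|L\|L_0D^2\alpha_{r_0T}.$$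
   Context: Problem (P): minimize $\psi_0(x):=f_0(x)+\chi_0(x)$ over $x\in\mathbb{R}^d$ subject to $\psi_i(x):=f_i(x)+\chi_i(x)\le\eta_i$, $i\in[m]:=\{1,\dots,m\}$, with $\chi_0$ proper convex lsc, $\chi_i$ convex continuous on $\mathrm{dom}\,\chi_0$, $f_i$ with $L_i$-Lipschitz gradients ($i=0,\dots,m$), $L=(L_1,\dots,L_m)^\top$, finite optimal value $\psi_0^*$, and nonempty compact feasible set; $\psi=(\psi_1,\dots,\psi_m)^\top$; vector inequalities and $|\cdot|$ componentwise. Subdifferential $\partial\psi_i(x):=\nabla f_i(x)+\partial\chi_i(x)$; $\mathcal{L}(x,\lambda)=\psi_0(x)+\sum_i\lambda_i(\psi_i(x)-\eta_i)$, $\partial_x\mathcal{L}(x,\lambda)=\partial\psi_0(x)+\sum_i\lambda_i\partial\psi_i(x)$; $\|S\|_-:=\inf\{\|s\|:s\in S\}$. Finite-sum setting: $f_0(x)=\frac1n\sum_{j=1}^nF(x,\xi_j)$ where each $F(\cdot,\xi_j)$ has $L_0$-Lipschitz gradient. Algorithm LCSVRG: given $x^0\in\mathrm{dom}\,\chi_0$, $\eta^0$ with $\psi(x^0)<\eta^0<\eta$, epoch length $T$, batch size $b$, $\gamma>0$. At step $k$: if $k$ is a multiple of $T$, set $G^k=\nabla f_0(x^k)$; otherwise draw a mini-batch $B_k$ of $b$ indices independently and uniformly from $\{1,\dots,n\}$ and set $G^k=\frac1b\sum_{j\in B_k}[\nabla F(x^k,\xi_j)-\nabla F(x^{k-1},\xi_j)]+G^{k-1}$.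 Set $\psi_0^k(x)=\langle G^k,x\rangle+\frac{\gamma}{2}\|x-x^k\|^2+\chi_0(x)$, $\psi_i^k(x)=f_i(x^k)+\langle\nabla f_i(x^k),x-x^k\rangle+\frac{L_i}{2}\|x-x^k\|^2+\chi_i(x)$ ($i\in[m]$), let $x^{k+1}$ minimize $\psi_0^k$ subject to $\psi_i^k(x)\le\eta_i^k$, $i\in[m]$, and set $\eta^{k+1}=\eta^k+\delta^k$ with $\delta^k>0$, $\eta^{k+1}<\eta$. A Lagrange multiplier $\lambda^{k+1}\in\mathbb{R}^m_+$ satisfies $0\in\partial\psi_0^k(x^{k+1})+\sum_i\lambda_i^{k+1}\partial\psi_i^k(x^{k+1})$ and $\lambda_i^{k+1}(\psi_i^k(x^{k+1})-\eta_i^k)=0$. *)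

theory Defs
  imports "HOL-Analysis.Analysis" "HOL-Probability.Probability"
begin

definition edom :: "('a \<Rightarrow> ereal) \<Rightarrow> 'a set" where
  "edom h = {x. h x < \<infinity>}"

definition proper_fun :: "('a \<Rightarrow> ereal) \<Rightarrow> bool" where
  "proper_fun h \<longleftrightarrow> (\<forall>x. h x \<noteq> -\<infinity>) \<and> (\<exists>x. h x < \<infinity>)"

definition econvex :: "('a::real_vector \<Rightarrow> ereal) \<Rightarrow> bool" where
  "econvex h \<longleftrightarrow> (\<forall>x y (t::real). 0 < t \<and> t < 1 \<longrightarrow>
      h ((1 - t) *\<^sub>R x + t *\<^sub>R y) \<le> ereal (1 - t) * h x + ereal t * h y)"

definition elsc :: "('a::topological_space \<Rightarrow> ereal) \<Rightarrow> bool" where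
  "elsc h \<longleftrightarrow> (\<forall>x. h x \<le> Liminf (at x) h)"

definition csubdiff :: "('a::real_inner \<Rightarrow> ereal) \<Rightarrow> 'a \<Rightarrow> 'a set" where
  "csubdiff h x = {s. h x < \<infinity> \<and> (\<forall>y. h x + ereal (s \<bullet> (y - x)) \<le> h y)}"

text \<open>Subdifferential of a composite function: gradient of the smooth part plus
  convex subdifferential of the nonsmooth part.\<close>
definition comp_subdiff :: "'a::real_inner \<Rightarrow> ('a \<Rightarrow> ereal) \<Rightarrow> 'a \<Rightarrow> 'a set" where
  "comp_subdiff g h x = (\<lambda>s. g + s) ` csubdiff h x"

definition lag_set :: "nat \<Rightarrow> 'a::real_vector set \<Rightarrow> (nat \<Rightarrow> 'a set) \<Rightarrow> (nat \<Rightarrow> real) \<Rightarrow> 'a set" where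
  "lag_set m S0 S lam = {g0 + (\<Sum>i\<in>{1..m}. lam i *\<^sub>R g i) | g0 g. g0 \<in> S0 \<and> (\<forall>i\<in>{1..m}. g i \<in> S i)}"

definition norm_minus :: "'a::real_normed_vector set \<Rightarrow> real" where
  "norm_minus S = Inf (norm ` S)"

definition batches :: "nat \<Rightarrow> nat \<Rightarrow> nat list set" where
  "batches n b = {xs. length xs = b \<and> set xs \<subseteq> {..<n}}"

text \<open>Distribution of the batch sequence for steps 0..K: i.i.d. uniform batches
  (each batch = b independent uniform indices); components beyond K are fixed.\<close>
definition batch_pmf :: "nat \<Rightarrow> nat \<Rightarrow> nat \<Rightarrow> (nat \<Rightarrow> nat list) pmf" where
  "batch_pmf n b K = Pi_pmf {..K} (replicate b 0) (\<lambda>_. pmf_of_set (batches n b))"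

definition lcsvrg_obj :: "'a::real_inner \<Rightarrow> real \<Rightarrow> 'a \<Rightarrow> ('a \<Rightarrow> ereal) \<Rightarrow> 'a \<Rightarrow> ereal" where
  "lcsvrg_obj Gk \<gamma> xk chi0 y = ereal (Gk \<bullet> y + \<gamma> / 2 * (norm (y - xk))\<^sup>2) + chi0 y"

definition lcsvrg_con :: "(nat \<Rightarrow> 'a::real_inner \<Rightarrow> real) \<Rightarrow> (nat \<Rightarrow> 'a \<Rightarrow> 'a) \<Rightarrow> (nat \<Rightarrow> real)
    \<Rightarrow> (nat \<Rightarrow> 'a \<Rightarrow> ereal) \<Rightarrow> 'a \<Rightarrow> nat \<Rightarrow> 'a \<Rightarrow> ereal" where
  "lcsvrg_con f gf Lc chi xk i y =
     ereal (f i xk + gf i xk \<bullet> (y - xk) + Lc i / 2 * (norm (y - xk))\<^sup>2) + chi i y"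

definition is_constr_min :: "nat \<Rightarrow> ('a \<Rightarrow> ereal) \<Rightarrow> (nat \<Rightarrow> 'a \<Rightarrow> ereal) \<Rightarrow> (nat \<Rightarrow> real) \<Rightarrow> 'a \<Rightarrow> bool" where
  "is_constr_min m obj con eta y \<longleftrightarrow>
     (\<forall>i\<in>{1..m}. con i y \<le> ereal (eta i)) \<and>
     (\<forall>z. (\<forall>i\<in>{1..m}. con i z \<le> ereal (eta i)) \<longrightarrow> obj y \<le> obj z)"

end

theory Submission
  imports Defs
begin

text \<open>Each LCSVRG subproblem is strongly convex and its KKT system is an approximate KKT system of
  the original problem: at \<open>x\<^sup>k\<^sup>+\<^sup>1\<close> the stationarity residual is controlled by the step
  \<open>\<parallel>x\<^sup>k\<^sup>+\<^sup>1 - x\<^sup>k\<parallel>\<close> and the estimator error \<open>\<parallel>G\<^sup>k - \<nabla>f\<^sub>0(x\<^sup>k)\<parallel>\<close>, and the complementarity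
  residual by \<open>\<parallel>\<eta> - \<eta>\<^sup>k\<parallel>\<close> and the squared step. Testing the optimality condition with the step
  gives a sufficient decrease of \<open>\<psi>\<^sub>0\<close> up to the estimator error; the iterates stay feasible, so
  \<open>\<psi>\<^sub>0 \<ge> \<psi>\<^sub>0\<^sup>*\<close> along them and telescoping bounds the expected squared path length. Within an
  epoch the SVRG error accumulates conditionally centered mini-batch increments, each of second
  moment at most \<open>L\<^sub>0\<^sup>2/b\<close> times a squared step, and this is absorbed by the decrease as long as
  \<open>L_tilde > 0\<close>. The weights are at most \<open>\<alpha>\<^sub>r\<^sub>0\<^sub>T\<close>, since \<open>\<alpha>\<close> is nondecreasing and constant on
  epochs.\<close>

lemma lipschitz_gradient_linearization_bound:
  fixes f :: "'a::real_inner \<Rightarrow> real"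
  assumes der: "\<And>y. (f has_derivative (\<lambda>h. g y \<bullet> h)) (at y)"
    and lip: "\<And>y z. norm (g y - g z) \<le> L * norm (y - z)"
  shows "\<bar>f y - f x - g x \<bullet> (y - x)\<bar> \<le> L / 2 * (norm (y - x))\<^sup>2"
proof -
  define h where "h = y - x"
  define c where "c = g x \<bullet> h"
  define q where "q = L / 2 * (norm h)\<^sup>2"
  have deriv: "((\<lambda>t. f (x + t *\<^sub>R h)) has_real_derivative (g (x + t *\<^sub>R h) \<bullet> h)) (at t)" for t
  proof -
    have "((\<lambda>t. x + t *\<^sub>R h) has_derivative (\<lambda>t. t *\<^sub>R h)) (at t)"
      by (auto intro!: derivative_eq_intros)
    from has_derivative_compose[OF this der]
    show ?thesis by (simp add: has_field_derivative_def mult_commute_abs)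
  qed
  have slope: "\<bar>g (x + t *\<^sub>R h) \<bullet> h - c\<bar> \<le> 2 * q * t" if "0 \<le> t" for t
  proof -
    have "\<bar>(g (x + t *\<^sub>R h) - g x) \<bullet> h\<bar> \<le> norm (g (x + t *\<^sub>R h) - g x) * norm h"
      by (rule Cauchy_Schwarz_ineq2)
    also have "\<dots> \<le> (L * norm (t *\<^sub>R h)) * norm h"
      using lip[of "x + t *\<^sub>R h" x] by (intro mult_right_mono) auto
    finally show ?thesis
      using that by (simp add: c_def q_def inner_diff_left power2_eq_square mult_ac)
  qed
  have up: "f (x + 1 *\<^sub>R h) - c * 1 - q * 1\<^sup>2 \<le> f (x + 0 *\<^sub>R h) - c * 0 - q * 0\<^sup>2"
  proof (rule DERIV_nonpos_imp_nonincreasing[of 0 1 "\<lambda>t. f (x + t *\<^sub>R h) - c * t - q * t\<^sup>2"])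
    fix t :: real assume "0 \<le> t" "t \<le> 1"
    then show "\<exists>y. ((\<lambda>t. f (x + t *\<^sub>R h) - c * t - q * t\<^sup>2) has_real_derivative y) (at t) \<and> y \<le> 0"
      using slope[of t] by (intro exI[of _ "g (x + t *\<^sub>R h) \<bullet> h - c - q * (2 * t)"] conjI)
        (auto intro!: derivative_eq_intros deriv)
  qed simp
  have lo: "f (x + 0 *\<^sub>R h) - c * 0 + q * 0\<^sup>2 \<le> f (x + 1 *\<^sub>R h) - c * 1 + q * 1\<^sup>2"
  proof (rule DERIV_nonneg_imp_nondecreasing[of 0 1 "\<lambda>t. f (x + t *\<^sub>R h) - c * t + q * t\<^sup>2"])
    fix t :: real assume "0 \<le> t" "t \<le> 1"
    then show "\<exists>y. ((\<lambda>t. f (x + t *\<^sub>R h) - c * t + q * t\<^sup>2) has_real_derivative y) (at t) \<and> 0 \<le> y"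
      using slope[of t] by (intro exI[of _ "g (x + t *\<^sub>R h) \<bullet> h - c + q * (2 * t)"] conjI)
        (auto intro!: derivative_eq_intros deriv)
  qed simp
  from up lo show ?thesis
    unfolding abs_le_iff by (simp add: c_def q_def h_def)
qed

lemma lipschitz_const_nonneg:
  fixes g :: "'a::euclidean_space \<Rightarrow> 'b::real_normed_vector"
  assumes "\<And>y z. norm (g y - g z) \<le> L * norm (y - z)"
  shows "0 \<le> L"
proof -
  obtain e :: 'a where "e \<in> Basis" using nonempty_Basis by blast
  with assms[of e 0] show ?thesis
    by (metis norm_Basis diff_zero mult.right_neutral norm_ge_zero order_trans)
qed

lemma sum_mult_le_L2_set_bound:
  fixes lam c :: "'i \<Rightarrow> real"
  assumes "\<forall>i\<in>A. 0 \<le> lam i" "\<forall>i\<in>A. 0 \<le> c i" "L2_set lam A \<le> B"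
  shows "(\<Sum>i\<in>A. lam i * c i) \<le> B * L2_set c A"
proof -
  have "(\<Sum>i\<in>A. lam i * c i) = (\<Sum>i\<in>A. \<bar>lam i\<bar> * \<bar>c i\<bar>)"
    using assms by (intro sum.cong) auto
  also have "\<dots> \<le> L2_set lam A * L2_set c A" by (rule L2_set_mult_ineq)
  also have "\<dots> \<le> B * L2_set c A" using assms(3) by (intro mult_right_mono) auto
  finally show ?thesis .
qed

lemma mult_le_weighted_squares:
  fixes p q \<beta> :: real
  assumes "0 < \<beta>"
  shows "p * q \<le> p\<^sup>2 / (2 * \<beta>) + \<beta> / 2 * q\<^sup>2"
proof -
  have "2 * \<beta> * (p * q) \<le> p\<^sup>2 + \<beta>\<^sup>2 * q\<^sup>2"
    using zero_le_power2[of "p - \<beta> * q"] by (simp add: power2_eq_square algebra_simps)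
  then show ?thesis using assms by (simp add: field_simps power2_eq_square)
qed

lemma sq_add_double_le:
  fixes u v z :: real
  assumes "0 \<le> u" "0 \<le> v" "z \<le> u\<^sup>2"
  shows "2 * (u + 2 * v)\<^sup>2 + z \<le> 8 * (u + v)\<^sup>2"
proof -
  have "8 * (u + v)\<^sup>2 - 2 * (u + 2 * v)\<^sup>2 = 6 * u\<^sup>2 + 8 * (u * v)"
    by (simp add: power2_eq_square algebra_simps)
  with assms show ?thesis by (smt (verit) mult_nonneg_nonneg zero_le_power2)
qed

lemma norm_midpoint_diff_sq:
  fixes y1 y2 x :: "'a::real_inner"
  shows "(norm ((1/2) *\<^sub>R y1 + (1/2) *\<^sub>R y2 - x))\<^sup>2
       = ((norm (y1 - x))\<^sup>2 + (norm (y2 - x))\<^sup>2) / 2 - (norm (y1 - y2))\<^sup>2 / 4"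
proof -
  have "(1/2) *\<^sub>R y1 + (1/2) *\<^sub>R y2 - x = (1/2) *\<^sub>R ((y1 - x) + (y2 - x))"
    by (simp add: algebra_simps flip: scaleR_add_left)
  moreover have "y1 - y2 = (y1 - x) - (y2 - x)" by simp
  ultimately show ?thesis
    by (simp add: power2_norm_eq_inner inner_add_left inner_add_right inner_diff_left inner_diff_right
        inner_commute field_simps)
qed

lemma norm_minus_le_norm:
  assumes "w \<in> S"
  shows "norm_minus S \<le> norm w"
  unfolding norm_minus_def using assms by (intro cInf_lower bdd_belowI[of _ 0]) auto

lemma norm_minus_nonneg:
  assumes "S \<noteq> {}"
  shows "0 \<le> norm_minus S"
  unfolding norm_minus_def using assms by (intro cInf_greatest) auto

section \<open>Extended-real convex functions\<close>

lemma proper_fun_finite: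
  assumes "proper_fun h" "h y < \<infinity>"
  shows "h y = ereal (real_of_ereal (h y))"
  using assms by (cases "h y") (auto simp: proper_fun_def)

lemma csubdiff_real_ineq:
  assumes "s \<in> csubdiff h x" "proper_fun h" "h y < \<infinity>"
  shows "real_of_ereal (h x) + s \<bullet> (y - x) \<le> real_of_ereal (h y)"
proof -
  have "h x < \<infinity>" "h x + ereal (s \<bullet> (y - x)) \<le> h y" using assms(1) by (auto simp: csubdiff_def)
  then show ?thesis
    using proper_fun_finite[OF assms(2)] assms(3)
    by (metis ereal_less_eq(3) plus_ereal.simps(1))
qed

lemma econvex_midpoint:
  assumes "econvex h" "proper_fun h" "h y1 < \<infinity>" "h y2 < \<infinity>"
  shows "h ((1/2) *\<^sub>R y1 + (1/2) *\<^sub>R y2) \<le> ereal ((real_of_ereal (h y1) + real_of_ereal (h y2)) / 2)"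
proof -
  have "h ((1 - 1/2) *\<^sub>R y1 + (1/2) *\<^sub>R y2) \<le> ereal (1 - 1/2) * h y1 + ereal (1/2) * h y2"
    using assms(1) unfolding econvex_def by (metis field_sum_of_halves half_gt_zero zero_less_one less_add_same_cancel1)
  also have "\<dots> = ereal ((real_of_ereal (h y1) + real_of_ereal (h y2)) / 2)"
    by (subst proper_fun_finite[OF assms(2,3)], subst proper_fun_finite[OF assms(2,4)]) (simp add: field_simps)
  finally show ?thesis by simp
qed

section \<open>One LCSVRG step\<close>

lemma lcsvrg_con_midpoint:
  fixes chi :: "nat \<Rightarrow> 'a::real_inner \<Rightarrow> ereal"
  assumes cv: "econvex (chi i)" "proper_fun (chi i)" "0 \<le> Lc i"
    and y1: "lcsvrg_con f gf Lc chi xk i y1 \<le> ereal e"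
    and y2: "lcsvrg_con f gf Lc chi xk i y2 \<le> ereal e"
  shows "lcsvrg_con f gf Lc chi xk i ((1/2) *\<^sub>R y1 + (1/2) *\<^sub>R y2) \<le> ereal e"
proof -
  let ?z = "(1/2) *\<^sub>R y1 + (1/2) *\<^sub>R y2"
  define p where "p = (\<lambda>y. f i xk + gf i xk \<bullet> (y - xk) + Lc i / 2 * (norm (y - xk))\<^sup>2)"
  define b1 where "b1 = real_of_ereal (chi i y1)"
  define b2 where "b2 = real_of_ereal (chi i y2)"
  have fin: "chi i y1 < \<infinity>" "chi i y2 < \<infinity>" using y1 y2 by (auto simp: lcsvrg_con_def)
  have "chi i y1 = ereal b1" "chi i y2 = ereal b2"
    using proper_fun_finite[OF cv(2) fin(1)] proper_fun_finite[OF cv(2) fin(2)] by (simp_all add: b1_def b2_def)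
  then have p_y: "p y1 + b1 \<le> e" "p y2 + b2 \<le> e"
    using y1 y2 by (simp_all add: lcsvrg_con_def p_def)
  have "(norm (?z - xk))\<^sup>2 \<le> ((norm (y1 - xk))\<^sup>2 + (norm (y2 - xk))\<^sup>2) / 2"
    using norm_midpoint_diff_sq[of y1 y2 xk] zero_le_power2[of "norm (y1 - y2)"] by linarith
  then have "Lc i / 2 * (norm (?z - xk))\<^sup>2 \<le> Lc i / 2 * (((norm (y1 - xk))\<^sup>2 + (norm (y2 - xk))\<^sup>2) / 2)"
    using cv(3) by (intro mult_left_mono) auto
  moreover have "gf i xk \<bullet> (?z - xk) = (gf i xk \<bullet> (y1 - xk) + gf i xk \<bullet> (y2 - xk)) / 2"
    by (simp add: inner_diff_right inner_add_right)
  ultimately have p_z: "p ?z \<le> (p y1 + p y2) / 2"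
    unfolding p_def by (simp add: field_simps)
  have "lcsvrg_con f gf Lc chi xk i ?z = ereal (p ?z) + chi i ?z"
    by (simp add: lcsvrg_con_def p_def)
  also have "\<dots> \<le> ereal (p ?z) + ereal ((b1 + b2) / 2)"
    unfolding b1_def b2_def by (rule add_left_mono[OF econvex_midpoint[OF cv(1,2) fin]])
  also have "\<dots> \<le> ereal e"
  proof -
    have "p ?z + (b1 + b2) / 2 \<le> e" using p_y p_z by (simp add: field_simps)
    then show ?thesis by simp
  qed
  finally show ?thesis .
qed

text \<open>The subproblem objective is \<open>\<gamma>\<close>-strongly convex on a convex feasible set.\<close>

lemma lcsvrg_subproblem_min_unique:
  fixes chi :: "nat \<Rightarrow> 'a::real_inner \<Rightarrow> ereal"
  assumes gam: "0 < \<gamma>"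
    and chi0: "econvex (chi 0)" "proper_fun (chi 0)"
    and chi: "\<forall>i\<in>{1..m}. econvex (chi i) \<and> proper_fun (chi i) \<and> 0 \<le> Lc i"
    and y1: "is_constr_min m (lcsvrg_obj G \<gamma> xk (chi 0)) (lcsvrg_con f gf Lc chi xk) eta y1"
    and y2: "is_constr_min m (lcsvrg_obj G \<gamma> xk (chi 0)) (lcsvrg_con f gf Lc chi xk) eta y2"
    and fin1: "chi 0 y1 < \<infinity>"
  shows "y1 = y2"
proof -
  let ?z = "(1/2) *\<^sub>R y1 + (1/2) *\<^sub>R y2"
  let ?obj = "lcsvrg_obj G \<gamma> xk (chi 0)"
  define q where "q = (\<lambda>y. G \<bullet> y + \<gamma> / 2 * (norm (y - xk))\<^sup>2)"
  define a1 where "a1 = real_of_ereal (chi 0 y1)"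
  define a2 where "a2 = real_of_ereal (chi 0 y2)"
  have obj_eq: "?obj y2 \<le> ?obj y1" "?obj y1 \<le> ?obj y2" using y1 y2 by (auto simp: is_constr_min_def)
  have fin2: "chi 0 y2 < \<infinity>"
    using obj_eq(1) fin1 by (auto simp: lcsvrg_obj_def)
  have A1: "chi 0 y1 = ereal a1" using proper_fun_finite[OF chi0(2) fin1] by (simp add: a1_def)
  have A2: "chi 0 y2 = ereal a2" using proper_fun_finite[OF chi0(2) fin2] by (simp add: a2_def)
  have eq: "q y1 + a1 = q y2 + a2"
    using obj_eq by (simp add: lcsvrg_obj_def A1 A2 q_def)
  have "\<forall>i\<in>{1..m}. lcsvrg_con f gf Lc chi xk i ?z \<le> ereal (eta i)"
    using y1 y2 chi by (auto simp: is_constr_min_def intro!: lcsvrg_con_midpoint)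
  then have "?obj y1 \<le> ?obj ?z" using y1 unfolding is_constr_min_def by blast
  also have "\<dots> = ereal (q ?z) + chi 0 ?z" by (simp add: lcsvrg_obj_def q_def)
  also have "\<dots> \<le> ereal (q ?z) + ereal ((a1 + a2) / 2)"
    unfolding a1_def a2_def by (rule add_left_mono[OF econvex_midpoint[OF chi0 fin1 fin2]])
  finally have le: "q y1 + a1 \<le> q ?z + (a1 + a2) / 2" by (simp add: lcsvrg_obj_def A1 q_def)
  have "q ?z = (q y1 + q y2) / 2 - \<gamma> / 8 * (norm (y1 - y2))\<^sup>2"
    unfolding q_def norm_midpoint_diff_sq by (simp add: algebra_simps add_divide_distrib)
  with le eq have "\<gamma> / 8 * (norm (y1 - y2))\<^sup>2 \<le> 0"
    unfolding add_divide_distrib by linarith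
  with gam have "(norm (y1 - y2))\<^sup>2 \<le> 0"
    by (simp add: mult_le_0_iff)
  then show ?thesis by simp
qed

text \<open>A single step \<open>x = x\<^sup>k\<close> to \<open>x' = x\<^sup>k\<^sup>+\<^sup>1\<close> with estimator \<open>G = G\<^sup>k\<close>, levels \<open>ek = \<eta>\<^sup>k\<close>
  and multiplier \<open>lam = \<lambda>\<^sup>k\<^sup>+\<^sup>1\<close>.\<close>

locale lcsvrg_step =
  fixes f :: "nat \<Rightarrow> 'a::real_inner \<Rightarrow> real" and gradf :: "nat \<Rightarrow> 'a \<Rightarrow> 'a"
    and chi :: "nat \<Rightarrow> 'a \<Rightarrow> ereal" and Lc :: "nat \<Rightarrow> real" and L0 :: real and m :: nat
    and x x' G :: 'a and \<gamma> B :: real and ek lam :: "nat \<Rightarrow> real"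
  assumes chi0_proper: "proper_fun (chi 0)"
    and chi_proper: "\<And>i. i \<in> {1..m} \<Longrightarrow> proper_fun (chi i)"
    and chi_dom: "\<And>i. i \<in> {1..m} \<Longrightarrow> edom (chi 0) \<subseteq> edom (chi i)"
    and Lc_nonneg: "\<And>i. i \<in> {1..m} \<Longrightarrow> 0 \<le> Lc i"
    and f0_taylor: "\<And>y z. \<bar>f 0 y - f 0 z - gradf 0 z \<bullet> (y - z)\<bar> \<le> L0 / 2 * (norm (y - z))\<^sup>2"
    and f_taylor: "\<And>i y z. i \<in> {1..m} \<Longrightarrow>
      \<bar>f i y - f i z - gradf i z \<bullet> (y - z)\<bar> \<le> Lc i / 2 * (norm (y - z))\<^sup>2"
    and gradf0_lip: "\<And>y z. norm (gradf 0 y - gradf 0 z) \<le> L0 * norm (y - z)"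
    and gradf_lip: "\<And>i y z. i \<in> {1..m} \<Longrightarrow> norm (gradf i y - gradf i z) \<le> Lc i * norm (y - z)"
    and next_min: "is_constr_min m (lcsvrg_obj G \<gamma> x (chi 0)) (lcsvrg_con f gradf Lc chi x) ek x'"
    and lam_nonneg: "\<And>i. i \<in> {1..m} \<Longrightarrow> 0 \<le> lam i"
    and kkt_stationary: "0 \<in> lag_set m (comp_subdiff (G + \<gamma> *\<^sub>R (x' - x)) (chi 0) x')
              (\<lambda>i. comp_subdiff (gradf i x + Lc i *\<^sub>R (x' - x)) (chi i) x') lam"
    and kkt_complementary: "\<And>i. i \<in> {1..m} \<Longrightarrow>
      lam i * (real_of_ereal (lcsvrg_con f gradf Lc chi x i x') - ek i) = 0"
    and lam_bound: "L2_set lam {1..m} \<le> B"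
begin

lemma kkt_subgradients:
  obtains s0 :: 'a and s :: "nat \<Rightarrow> 'a" where "s0 \<in> csubdiff (chi 0) x'" "\<forall>i\<in>{1..m}. s i \<in> csubdiff (chi i) x'"
    "(G + \<gamma> *\<^sub>R (x' - x) + s0) + (\<Sum>i\<in>{1..m}. lam i *\<^sub>R (gradf i x + Lc i *\<^sub>R (x' - x) + s i)) = 0"
proof -
  from kkt_stationary obtain g0 g where g0: "g0 \<in> comp_subdiff (G + \<gamma> *\<^sub>R (x' - x)) (chi 0) x'"
    and g: "\<forall>i\<in>{1..m}. g i \<in> comp_subdiff (gradf i x + Lc i *\<^sub>R (x' - x)) (chi i) x'"
    and sum0: "g0 + (\<Sum>i\<in>{1..m}. lam i *\<^sub>R g i) = 0"
    unfolding lag_set_def by auto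
  from g0 obtain s0 where s0: "s0 \<in> csubdiff (chi 0) x'" "g0 = G + \<gamma> *\<^sub>R (x' - x) + s0"
    unfolding comp_subdiff_def by auto
  have "\<forall>i\<in>{1..m}. \<exists>si. si \<in> csubdiff (chi i) x' \<and> g i = gradf i x + Lc i *\<^sub>R (x' - x) + si"
    using g unfolding comp_subdiff_def by auto
  then obtain s where s: "\<forall>i\<in>{1..m}. s i \<in> csubdiff (chi i) x' \<and> g i = gradf i x + Lc i *\<^sub>R (x' - x) + s i"
    by metis
  have "(\<Sum>i\<in>{1..m}. lam i *\<^sub>R g i) = (\<Sum>i\<in>{1..m}. lam i *\<^sub>R (gradf i x + Lc i *\<^sub>R (x' - x) + s i))"
    using s by (intro sum.cong) auto
  with sum0 s0 s show ?thesis using that by auto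
qed

lemma next_dom: "x' \<in> edom (chi 0)"
  by (rule kkt_subgradients) (auto simp: csubdiff_def edom_def)

lemma chi_finite: "i \<in> {1..m} \<Longrightarrow> y \<in> edom (chi 0) \<Longrightarrow> chi i y = ereal (real_of_ereal (chi i y))"
  using chi_proper chi_dom by (intro proper_fun_finite) (auto simp: edom_def)

lemma lcsvrg_con_next:
  "i \<in> {1..m} \<Longrightarrow> lcsvrg_con f gradf Lc chi x i x'
   = ereal (f i x + gradf i x \<bullet> (x' - x) + Lc i / 2 * (norm (x' - x))\<^sup>2 + real_of_ereal (chi i x'))"
  unfolding lcsvrg_con_def by (subst chi_finite[OF _ next_dom]) auto

lemma next_feasible:
  assumes i: "i \<in> {1..m}"
  shows "f i x' + real_of_ereal (chi i x') \<le> ek i"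
proof -
  have "lcsvrg_con f gradf Lc chi x i x' \<le> ereal (ek i)"
    using next_min i by (auto simp: is_constr_min_def)
  then have "f i x + gradf i x \<bullet> (x' - x) + Lc i / 2 * (norm (x' - x))\<^sup>2 + real_of_ereal (chi i x') \<le> ek i"
    by (simp add: lcsvrg_con_next[OF i])
  moreover have "f i x' - f i x - gradf i x \<bullet> (x' - x) \<le> Lc i / 2 * (norm (x' - x))\<^sup>2"
    using f_taylor[OF i] by (meson abs_le_D1)
  ultimately show ?thesis by linarith
qed

text \<open>\<open>lam\<close> is a multiplier for the quadratic model of the constraints: on an active constraint
  \<open>\<psi>_i(x')\<close> may fall short of \<open>ek i\<close> by up to \<open>Lc i \<parallel>x' - x\<parallel>\<^sup>2\<close>, whence the second term.\<close>

lemma complementarity_bound: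
  assumes ek_lt: "\<forall>i\<in>{1..m}. ek i < eta i"
  shows "(\<Sum>i\<in>{1..m}. lam i * \<bar>real_of_ereal (ereal (f i x') + chi i x') - eta i\<bar>)
     \<le> B * L2_set (\<lambda>i. eta i - ek i) {1..m} + B * L2_set Lc {1..m} * (norm (x' - x))\<^sup>2"
proof -
  have "(\<Sum>i\<in>{1..m}. lam i * \<bar>real_of_ereal (ereal (f i x') + chi i x') - eta i\<bar>)
      \<le> (\<Sum>i\<in>{1..m}. lam i * (eta i - ek i) + lam i * Lc i * (norm (x' - x))\<^sup>2)"
  proof (rule sum_mono)
    fix i assume i: "i \<in> {1..m}"
    let ?R = "f i x' + real_of_ereal (chi i x')"
    let ?c = "real_of_ereal (lcsvrg_con f gradf Lc chi x i x')"
    have R_eq: "real_of_ereal (ereal (f i x') + chi i x') = ?R"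
      by (subst chi_finite[OF i next_dom]) simp
    have "?R \<le> eta i" using next_feasible[OF i] ek_lt[rule_format, OF i] by linarith
    then have abs_eq: "\<bar>?R - eta i\<bar> = eta i - ?R" by simp
    have "lam i * ?c - lam i * ek i = 0"
      using kkt_complementary[OF i] by (simp only: right_diff_distrib)
    then have "lam i * (eta i - ?R) = lam i * (eta i - ek i) + lam i * (?c - ?R)"
      by (simp only: right_diff_distrib)
    also have "\<dots> \<le> lam i * (eta i - ek i) + lam i * (Lc i * (norm (x' - x))\<^sup>2)"
    proof -
      have "?c - ?R \<le> Lc i * (norm (x' - x))\<^sup>2"
        using abs_le_D2[OF f_taylor[OF i, of x' x]] unfolding lcsvrg_con_next[OF i] by simp
      then show ?thesis using lam_nonneg[OF i] by (intro add_left_mono mult_left_mono)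
    qed
    finally show "lam i * \<bar>real_of_ereal (ereal (f i x') + chi i x') - eta i\<bar>
        \<le> lam i * (eta i - ek i) + lam i * Lc i * (norm (x' - x))\<^sup>2"
      unfolding R_eq abs_eq by (simp add: mult.assoc)
  qed
  also have "\<dots> = (\<Sum>i\<in>{1..m}. lam i * (eta i - ek i)) + (\<Sum>i\<in>{1..m}. lam i * Lc i) * (norm (x' - x))\<^sup>2"
    by (simp add: sum.distrib sum_distrib_right)
  also have "\<dots> \<le> B * L2_set (\<lambda>i. eta i - ek i) {1..m} + B * L2_set Lc {1..m} * (norm (x' - x))\<^sup>2"
    using ek_lt lam_nonneg Lc_nonneg lam_bound
    by (intro add_mono mult_right_mono sum_mult_le_L2_set_bound) auto
  finally show ?thesis .
qed

lemma stationarity_bound: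
  assumes "0 \<le> \<gamma>" "0 \<le> L0"
  shows "(norm_minus (lag_set m (comp_subdiff (gradf 0 x') (chi 0) x')
             (\<lambda>i. comp_subdiff (gradf i x') (chi i) x') lam))\<^sup>2
    \<le> 2 * (\<gamma> + L0 + 2 * B * L2_set Lc {1..m})\<^sup>2 * (norm (x' - x))\<^sup>2 + 2 * (norm (G - gradf 0 x))\<^sup>2"
proof -
  obtain s0 s where s0: "s0 \<in> csubdiff (chi 0) x'" and s: "\<forall>i\<in>{1..m}. s i \<in> csubdiff (chi i) x'"
    and kkt: "(G + \<gamma> *\<^sub>R (x' - x) + s0) + (\<Sum>i\<in>{1..m}. lam i *\<^sub>R (gradf i x + Lc i *\<^sub>R (x' - x) + s i)) = 0"
    by (rule kkt_subgradients)
  let ?D = "x' - x"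
  let ?S = "lag_set m (comp_subdiff (gradf 0 x') (chi 0) x') (\<lambda>i. comp_subdiff (gradf i x') (chi i) x') lam"
  let ?C = "\<gamma> + L0 + 2 * B * L2_set Lc {1..m}"
  define u where "u = gradf 0 x' - G - \<gamma> *\<^sub>R ?D"
  define v where "v = (\<Sum>i\<in>{1..m}. lam i *\<^sub>R (gradf i x' - gradf i x - Lc i *\<^sub>R ?D))"
  define w where "w = (gradf 0 x' + s0) + (\<Sum>i\<in>{1..m}. lam i *\<^sub>R (gradf i x' + s i))"
  have w_in: "w \<in> ?S"
    unfolding lag_set_def comp_subdiff_def w_def using s0 s
    by (intro CollectI exI[of _ "gradf 0 x' + s0"] exI[of _ "\<lambda>i. gradf i x' + s i"]) auto
  text \<open>Subtracting the optimality condition of the subproblem leaves only model errors.\<close>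
  have "w = w - ((G + \<gamma> *\<^sub>R ?D + s0) + (\<Sum>i\<in>{1..m}. lam i *\<^sub>R (gradf i x + Lc i *\<^sub>R ?D + s i)))"
    using kkt by simp
  also have "\<dots> = u + v"
  proof -
    have regroup: "(a + c + p) - ((g + d + c) + q) = (a - g - d) + (p - q)" for a c p g d q :: 'a
      by (simp add: algebra_simps)
    have "(\<Sum>i\<in>{1..m}. lam i *\<^sub>R (gradf i x' + s i)) - (\<Sum>i\<in>{1..m}. lam i *\<^sub>R (gradf i x + Lc i *\<^sub>R ?D + s i)) = v"
      unfolding v_def sum_subtractf[symmetric] by (intro sum.cong) (simp_all add: algebra_simps)
    then show ?thesis unfolding w_def regroup u_def by simp
  qed
  finally have w_eq: "w = u + v" .
  have "norm u = norm ((gradf 0 x' - gradf 0 x) - (G - gradf 0 x) - \<gamma> *\<^sub>R ?D)"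
    unfolding u_def by (rule arg_cong[where f = norm]) simp
  also have "\<dots> \<le> norm (gradf 0 x' - gradf 0 x) + norm (G - gradf 0 x) + norm (\<gamma> *\<^sub>R ?D)"
    using norm_triangle_ineq4[of "gradf 0 x' - gradf 0 x - (G - gradf 0 x)" "\<gamma> *\<^sub>R ?D"]
      norm_triangle_ineq4[of "gradf 0 x' - gradf 0 x" "G - gradf 0 x"] by linarith
  also have "\<dots> \<le> L0 * norm ?D + norm (G - gradf 0 x) + \<gamma> * norm ?D"
    using gradf0_lip[of x' x] assms(1) by simp
  finally have norm_u: "norm u \<le> (\<gamma> + L0) * norm ?D + norm (G - gradf 0 x)"
    by (simp add: algebra_simps)
  have "norm v \<le> (\<Sum>i\<in>{1..m}. lam i * (2 * Lc i * norm ?D))"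
    unfolding v_def
  proof (rule order_trans[OF norm_sum sum_mono])
    fix i assume i: "i \<in> {1..m}"
    have "norm (gradf i x' - gradf i x - Lc i *\<^sub>R ?D) \<le> norm (gradf i x' - gradf i x) + norm (Lc i *\<^sub>R ?D)"
      by (rule norm_triangle_ineq4)
    also have "\<dots> \<le> 2 * Lc i * norm ?D" using gradf_lip[OF i, of x' x] Lc_nonneg[OF i] by simp
    finally show "norm (lam i *\<^sub>R (gradf i x' - gradf i x - Lc i *\<^sub>R ?D)) \<le> lam i * (2 * Lc i * norm ?D)"
      using lam_nonneg[OF i] by (simp add: mult_left_mono)
  qed
  also have "\<dots> = 2 * norm ?D * (\<Sum>i\<in>{1..m}. lam i * Lc i)"
    by (simp add: sum_distrib_left algebra_simps)
  also have "\<dots> \<le> 2 * norm ?D * (B * L2_set Lc {1..m})"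
    using lam_nonneg Lc_nonneg lam_bound by (intro mult_left_mono sum_mult_le_L2_set_bound) auto
  finally have norm_v: "norm v \<le> 2 * B * L2_set Lc {1..m} * norm ?D"
    by (simp add: algebra_simps)
  have "norm w \<le> ?C * norm ?D + norm (G - gradf 0 x)"
    using norm_triangle_ineq[of u v] norm_u norm_v unfolding w_eq distrib_right by linarith
  then have "(norm_minus ?S)\<^sup>2 \<le> (?C * norm ?D + norm (G - gradf 0 x))\<^sup>2"
    using norm_minus_le_norm[OF w_in] norm_minus_nonneg[of ?S] w_in by (intro power_mono) auto
  also have "\<dots> \<le> 2 * (?C * norm ?D)\<^sup>2 + 2 * (norm (G - gradf 0 x))\<^sup>2"
    using zero_le_power2[of "?C * norm ?D - norm (G - gradf 0 x)"]
    by (simp add: power2_eq_square algebra_simps)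
  finally show ?thesis by (simp add: power_mult_distrib)
qed

end

locale lcsvrg_step_feasible = lcsvrg_step +
  assumes x_dom: "x \<in> edom (chi 0)"
    and x_feasible: "\<And>i. i \<in> {1..m} \<Longrightarrow> f i x + real_of_ereal (chi i x) \<le> ek i"
begin

lemma multiplier_inner_nonneg:
  assumes i: "i \<in> {1..m}" and si: "si \<in> csubdiff (chi i) x'"
  shows "0 \<le> lam i * ((gradf i x + Lc i *\<^sub>R (x' - x) + si) \<bullet> (x' - x))"
proof -
  have "real_of_ereal (chi i x') + si \<bullet> (x - x') \<le> real_of_ereal (chi i x)"
    using chi_proper[OF i] chi_dom[OF i] x_dom by (intro csubdiff_real_ineq[OF si]) (auto simp: edom_def)
  moreover have "Lc i / 2 * (norm (x' - x))\<^sup>2 \<le> Lc i * (norm (x' - x))\<^sup>2"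
    using Lc_nonneg[OF i] by (intro mult_right_mono) auto
  moreover have "(gradf i x + Lc i *\<^sub>R (x' - x) + si) \<bullet> (x' - x)
      = gradf i x \<bullet> (x' - x) + Lc i * (norm (x' - x))\<^sup>2 - si \<bullet> (x - x')"
    by (simp add: inner_add_left inner_diff_right power2_norm_eq_inner right_diff_distrib)
  ultimately have "real_of_ereal (lcsvrg_con f gradf Lc chi x i x') - ek i
      \<le> (gradf i x + Lc i *\<^sub>R (x' - x) + si) \<bullet> (x' - x)"
    using x_feasible[OF i] unfolding lcsvrg_con_next[OF i] real_of_ereal.simps by linarith
  then have "lam i * (real_of_ereal (lcsvrg_con f gradf Lc chi x i x') - ek i)
      \<le> lam i * ((gradf i x + Lc i *\<^sub>R (x' - x) + si) \<bullet> (x' - x))"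
    using lam_nonneg[OF i] by (rule mult_left_mono)
  with kkt_complementary[OF i] show ?thesis by linarith
qed

lemma inexact_descent:
  "f 0 x' + real_of_ereal (chi 0 x') \<le> f 0 x + real_of_ereal (chi 0 x) - \<gamma> * (norm (x' - x))\<^sup>2
     + L0 / 2 * (norm (x' - x))\<^sup>2 + (gradf 0 x - G) \<bullet> (x' - x)"
proof -
  obtain s0 s where s0: "s0 \<in> csubdiff (chi 0) x'" and s: "\<forall>i\<in>{1..m}. s i \<in> csubdiff (chi i) x'"
    and kkt: "(G + \<gamma> *\<^sub>R (x' - x) + s0) + (\<Sum>i\<in>{1..m}. lam i *\<^sub>R (gradf i x + Lc i *\<^sub>R (x' - x) + s i)) = 0"
    by (rule kkt_subgradients)
  let ?D = "x' - x"
  have "0 = ((G + \<gamma> *\<^sub>R ?D + s0) + (\<Sum>i\<in>{1..m}. lam i *\<^sub>R (gradf i x + Lc i *\<^sub>R ?D + s i))) \<bullet> ?D"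
    using kkt by simp
  also have "\<dots> = (G + \<gamma> *\<^sub>R ?D + s0) \<bullet> ?D + (\<Sum>i\<in>{1..m}. lam i * ((gradf i x + Lc i *\<^sub>R ?D + s i) \<bullet> ?D))"
    by (simp add: inner_add_left inner_sum_left)
  also have "\<dots> \<ge> (G + \<gamma> *\<^sub>R ?D + s0) \<bullet> ?D"
    using s by (auto intro!: sum_nonneg multiplier_inner_nonneg)
  finally have "G \<bullet> ?D + \<gamma> * (norm ?D)\<^sup>2 + s0 \<bullet> ?D \<le> 0"
    by (simp add: inner_add_left power2_norm_eq_inner)
  moreover have "real_of_ereal (chi 0 x') + s0 \<bullet> (x - x') \<le> real_of_ereal (chi 0 x)"
    using csubdiff_real_ineq[OF s0 chi0_proper] x_dom by (simp add: edom_def)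
  moreover have "s0 \<bullet> (x - x') = - (s0 \<bullet> ?D)" "(gradf 0 x - G) \<bullet> ?D = gradf 0 x \<bullet> ?D - G \<bullet> ?D"
    by (simp_all add: inner_diff_left inner_diff_right)
  moreover have "f 0 x' - f 0 x - gradf 0 x \<bullet> ?D \<le> L0 / 2 * (norm ?D)\<^sup>2"
    using f0_taylor by (meson abs_le_D1)
  ultimately show ?thesis by linarith
qed

end

section \<open>Mini-batch sampling\<close>

lemma batches_Suc: "batches n (Suc b) = (\<lambda>(j, s). j # s) ` ({..<n} \<times> batches n b)"
  by (auto simp: batches_def length_Suc_conv image_iff)

lemma finite_batches: "finite (batches n b)"
  using finite_lists_length_eq[of "{..<n}" b] by (simp add: batches_def conj_commute)

lemma card_batches: "card (batches n b) = n ^ b"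
  using card_lists_length_eq[of "{..<n}" b] by (simp add: batches_def conj_commute)

lemma replicate_in_batches: "0 < n \<Longrightarrow> replicate b 0 \<in> batches n b"
  by (auto simp: batches_def)

lemma sum_batches_Suc:
  "(\<Sum>s\<in>batches n (Suc b). h s) = (\<Sum>j<n. \<Sum>s\<in>batches n b. h (j # s))"
proof -
  have "inj_on (\<lambda>(j, s). j # s) ({..<n} \<times> batches n b)"
    by (auto simp: inj_on_def)
  then show ?thesis
    unfolding batches_Suc by (simp add: sum.reindex sum.cartesian_product case_prod_unfold)
qed

lemma sum_batches_sum_list_centered:
  fixes v :: "nat \<Rightarrow> 'a::real_vector"
  assumes "(\<Sum>j<n. v j) = 0"
  shows "(\<Sum>s\<in>batches n b. sum_list (map v s)) = 0"
proof (induction b)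
  case 0 then show ?case by (simp add: batches_def)
next
  case (Suc b)
  have "(\<Sum>s\<in>batches n (Suc b). sum_list (map v s))
      = (\<Sum>j<n. of_nat (card (batches n b)) *\<^sub>R v j) + (\<Sum>j<n. \<Sum>s\<in>batches n b. sum_list (map v s))"
    by (simp add: sum_batches_Suc sum.distrib sum_constant_scaleR)
  also have "\<dots> = 0" using Suc assms by (simp flip: scaleR_sum_right)
  finally show ?case .
qed

text \<open>Independence of the draws: the cross terms vanish because \<open>v\<close> is centered.\<close>

lemma sum_batches_norm_sum_list_centered:
  fixes v :: "nat \<Rightarrow> 'a::real_inner"
  assumes centered: "(\<Sum>j<n. v j) = 0"
  shows "real n * (\<Sum>s\<in>batches n b. (norm (sum_list (map v s)))\<^sup>2)
           = real b * real n ^ b * (\<Sum>j<n. (norm (v j))\<^sup>2)"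
proof (induction b)
  case 0 then show ?case by (simp add: batches_def)
next
  case (Suc b)
  let ?W = "\<lambda>s. sum_list (map v s)"
  have cross: "(\<Sum>j<n. \<Sum>s\<in>batches n b. v j \<bullet> ?W s) = 0"
    using centered by (simp add: sum.swap[of _ "batches n b"] flip: inner_sum_left)
  have "(norm (v j + ?W s))\<^sup>2 = (norm (v j))\<^sup>2 + 2 * (v j \<bullet> ?W s) + (norm (?W s))\<^sup>2" for j s
    by (simp add: power2_norm_eq_inner inner_add_left inner_add_right inner_commute)
  then have "(\<Sum>s\<in>batches n (Suc b). (norm (?W s))\<^sup>2)
      = (\<Sum>j<n. \<Sum>s\<in>batches n b. (norm (v j))\<^sup>2 + 2 * (v j \<bullet> ?W s) + (norm (?W s))\<^sup>2)"
    by (simp add: sum_batches_Suc)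
  also have "\<dots> = real (n ^ b) * (\<Sum>j<n. (norm (v j))\<^sup>2) + real n * (\<Sum>s\<in>batches n b. (norm (?W s))\<^sup>2)"
    using cross by (simp add: sum.distrib card_batches sum_distrib_left[symmetric] sum_distrib_right[symmetric])
  finally show ?case
    using Suc.IH by (simp add: algebra_simps)
qed

lemma sum_norm_sq_centered_le:
  fixes u :: "nat \<Rightarrow> 'a::real_inner"
  assumes "0 < n"
  shows "(\<Sum>j<n. (norm (u j - (1 / real n) *\<^sub>R (\<Sum>j<n. u j)))\<^sup>2) \<le> (\<Sum>j<n. (norm (u j))\<^sup>2)"
proof -
  define ub where "ub = (1 / real n) *\<^sub>R (\<Sum>j<n. u j)"
  have sum_u: "(\<Sum>j<n. u j) = real n *\<^sub>R ub" using assms by (simp add: ub_def)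
  have "(\<Sum>j<n. (norm (u j - ub))\<^sup>2) = (\<Sum>j<n. (norm (u j))\<^sup>2 - 2 * (u j \<bullet> ub) + (norm ub)\<^sup>2)"
    by (intro sum.cong) (simp_all add: power2_norm_eq_inner inner_diff_left inner_diff_right inner_commute)
  also have "\<dots> = (\<Sum>j<n. (norm (u j))\<^sup>2) - 2 * ((\<Sum>j<n. u j) \<bullet> ub) + real n * (norm ub)\<^sup>2"
    by (simp add: sum.distrib sum_subtractf sum_distrib_left inner_sum_left)
  also have "\<dots> = (\<Sum>j<n. (norm (u j))\<^sup>2) - real n * (norm ub)\<^sup>2"
    unfolding sum_u by (simp add: power2_norm_eq_inner)
  finally show ?thesis by (simp add: ub_def)
qed

text \<open>The conditional variance of one SVRG update: \<open>u j\<close> stands for the component gradient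
  difference \<open>\<nabla>F(x\<^sup>k, \<xi>\<^sub>j) - \<nabla>F(x\<^sup>k\<^sup>-\<^sup>1, \<xi>\<^sub>j)\<close> and \<open>a\<close> for the error of \<open>G\<^sup>k\<^sup>-\<^sup>1\<close>.\<close>

lemma minibatch_variance_bound:
  fixes u :: "nat \<Rightarrow> 'a::real_inner" and a :: 'a
  assumes n: "0 < n" and b: "0 < b" and u_bound: "\<forall>j<n. norm (u j) \<le> c"
  shows "(\<Sum>s\<in>batches n b. (norm (a + (1 / real b) *\<^sub>R (\<Sum>j\<leftarrow>s. u j) - (1 / real n) *\<^sub>R (\<Sum>j<n. u j)))\<^sup>2)
            / real (card (batches n b)) \<le> (norm a)\<^sup>2 + c\<^sup>2 / real b"
proof -
  define ub where "ub = (1 / real n) *\<^sub>R (\<Sum>j<n. u j)"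
  define v where "v = (\<lambda>j. u j - ub)"
  let ?W = "\<lambda>s. sum_list (map v s)"
  have "(\<Sum>j<n. u j) = real n *\<^sub>R ub" using n by (simp add: ub_def)
  then have centered: "(\<Sum>j<n. v j) = 0"
    by (simp add: v_def sum_subtractf sum_constant_scaleR)
  have shift: "a + (1 / real b) *\<^sub>R (\<Sum>j\<leftarrow>s. u j) - ub = a + (1 / real b) *\<^sub>R ?W s"
    if s: "s \<in> batches n b" for s
  proof -
    have "(\<Sum>j\<leftarrow>s. u j) = sum_list (map (\<lambda>j. v j + ub) s)" by (simp add: v_def)
    also have "\<dots> = ?W s + real b *\<^sub>R ub"
      using s by (induction s arbitrary: b) (auto simp: batches_def algebra_simps)
    finally show ?thesis using b by (simp add: algebra_simps)
  qed
  have sq: "(norm (a + (1 / real b) *\<^sub>R ?W s))\<^sup>2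
      = (norm a)\<^sup>2 + 2 / real b * (a \<bullet> ?W s) + (norm (?W s))\<^sup>2 / (real b)\<^sup>2" for s
    unfolding power2_norm_eq_inner
    by (simp add: inner_add_left inner_add_right inner_commute field_simps power2_eq_square)
  have card: "real (card (batches n b)) = real n ^ b" by (simp add: card_batches)
  have "(\<Sum>s\<in>batches n b. (norm (a + (1 / real b) *\<^sub>R (\<Sum>j\<leftarrow>s. u j) - ub))\<^sup>2)
     = (\<Sum>s\<in>batches n b. (norm a)\<^sup>2 + 2 / real b * (a \<bullet> ?W s) + (norm (?W s))\<^sup>2 / (real b)\<^sup>2)"
    by (intro sum.cong) (simp_all add: shift sq)
  also have "\<dots> = real n ^ b * (norm a)\<^sup>2 + 2 / real b * (a \<bullet> (\<Sum>s\<in>batches n b. ?W s))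
        + (\<Sum>s\<in>batches n b. (norm (?W s))\<^sup>2) / (real b)\<^sup>2"
    by (simp add: sum.distrib card sum_distrib_left inner_sum_right sum_divide_distrib)
  also have "(\<Sum>s\<in>batches n b. ?W s) = 0"
    by (rule sum_batches_sum_list_centered[OF centered])
  also have "(\<Sum>s\<in>batches n b. (norm (?W s))\<^sup>2) = real b * real n ^ b * (\<Sum>j<n. (norm (v j))\<^sup>2) / real n"
    using sum_batches_norm_sum_list_centered[OF centered, of b] n by (simp add: field_simps)
  finally have "(\<Sum>s\<in>batches n b. (norm (a + (1 / real b) *\<^sub>R (\<Sum>j\<leftarrow>s. u j) - ub))\<^sup>2)
      / real (card (batches n b)) = (norm a)\<^sup>2 + (\<Sum>j<n. (norm (v j))\<^sup>2) / (real b * real n)"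
    using b n unfolding card by (simp add: field_simps power2_eq_square)
  also have "\<dots> \<le> (norm a)\<^sup>2 + (real n * c\<^sup>2) / (real b * real n)"
  proof -
    have "(\<Sum>j<n. (norm (v j))\<^sup>2) \<le> (\<Sum>j<n. (norm (u j))\<^sup>2)"
      using sum_norm_sq_centered_le[OF n, of u] by (simp add: v_def ub_def)
    also have "\<dots> \<le> (\<Sum>j<n. c\<^sup>2)"
      using u_bound by (intro sum_mono power_mono) auto
    finally have "(\<Sum>j<n. (norm (v j))\<^sup>2) \<le> real n * c\<^sup>2" by simp
    then show ?thesis using b n by (intro add_left_mono divide_right_mono) auto
  qed
  finally show ?thesis using n by (simp add: ub_def)
qed

definition batch_paths :: "nat \<Rightarrow> nat \<Rightarrow> (nat \<Rightarrow> nat list) set" where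
  "batch_paths n b = {\<omega>. \<forall>k. \<omega> k \<in> batches n b}"

lemma set_batch_pmf:
  assumes "0 < n"
  shows "set_pmf (batch_pmf n b K) = PiE_dflt {..K} (replicate b 0) (\<lambda>_. batches n b)"
proof -
  have "batches n b \<noteq> {}" using replicate_in_batches[OF assms] by blast
  then show ?thesis
    unfolding batch_pmf_def by (subst set_Pi_pmf) (auto simp: finite_batches o_def)
qed

lemma finite_set_batch_pmf: "0 < n \<Longrightarrow> finite (set_pmf (batch_pmf n b K))"
  by (simp add: set_batch_pmf finite_PiE_dflt finite_batches)

lemma set_batch_pmf_subset_batch_paths:
  assumes "0 < n"
  shows "set_pmf (batch_pmf n b K) \<subseteq> batch_paths n b"
proof (unfold batch_paths_def, intro subsetI CollectI allI)
  fix \<omega> k assume "\<omega> \<in> set_pmf (batch_pmf n b K)"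
  then show "\<omega> k \<in> batches n b"
    using assms by (cases "k \<le> K") (auto simp: set_batch_pmf PiE_dflt_def replicate_in_batches)
qed

lemma expectation_finite_mono:
  fixes g h :: "'a \<Rightarrow> real"
  assumes "finite (set_pmf p)" "\<And>x. x \<in> set_pmf p \<Longrightarrow> g x \<le> h x"
  shows "measure_pmf.expectation p g \<le> measure_pmf.expectation p h"
  using assms by (intro integral_mono_AE) (auto simp: AE_measure_pmf_iff integrable_measure_pmf_finite)

lemma expectation_finite_add:
  fixes g h :: "'a \<Rightarrow> real"
  assumes "finite (set_pmf p)"
  shows "measure_pmf.expectation p (\<lambda>x. g x + h x) = measure_pmf.expectation p g + measure_pmf.expectation p h"
  using assms by (intro Bochner_Integration.integral_add) (auto simp: integrable_measure_pmf_finite)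

lemma expectation_finite_sum:
  fixes g :: "'i \<Rightarrow> 'a \<Rightarrow> real"
  assumes "finite (set_pmf p)"
  shows "measure_pmf.expectation p (\<lambda>x. \<Sum>k\<in>A. g k x) = (\<Sum>k\<in>A. measure_pmf.expectation p (g k))"
  using assms by (intro Bochner_Integration.integral_sum) (auto simp: integrable_measure_pmf_finite)

lemma expectation_pair_pmf_iterated:
  fixes h :: "'a \<times> 'b \<Rightarrow> real"
  assumes fp: "finite (set_pmf p)" and fq: "finite (set_pmf q)"
  shows "measure_pmf.expectation (pair_pmf p q) h
         = measure_pmf.expectation q (\<lambda>z. measure_pmf.expectation p (\<lambda>y. h (y, z)))"
proof -
  have "measure_pmf.expectation (pair_pmf p q) h
      = (\<Sum>yz\<in>set_pmf p \<times> set_pmf q. h yz * pmf (pair_pmf p q) yz)"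
    using fp fq by (subst integral_measure_pmf_real) auto
  also have "\<dots> = (\<Sum>y\<in>set_pmf p. \<Sum>z\<in>set_pmf q. h (y, z) * (pmf p y * pmf q z))"
    by (subst sum.cartesian_product) (auto intro!: sum.cong simp: pmf_pair)
  also have "\<dots> = (\<Sum>z\<in>set_pmf q. (\<Sum>y\<in>set_pmf p. h (y, z) * pmf p y) * pmf q z)"
    by (subst sum.swap) (simp add: sum_distrib_right mult.assoc)
  also have "\<dots> = measure_pmf.expectation q (\<lambda>z. measure_pmf.expectation p (\<lambda>y. h (y, z)))"
    using fp fq by (simp add: integral_measure_pmf_real)
  finally show ?thesis .
qed

text \<open>This expresses conditioning on all batches but the \<open>k\<close>-th.\<close>

lemma expectation_batch_pmf_resample:
  fixes g :: "(nat \<Rightarrow> nat list) \<Rightarrow> real"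
  assumes n: "0 < n" and k: "k \<le> K"
  shows "measure_pmf.expectation (batch_pmf n b K) g
       = measure_pmf.expectation (batch_pmf n b K)
           (\<lambda>w. (\<Sum>s\<in>batches n b. g (w(k := s))) / real (card (batches n b)))"
proof -
  let ?S = "batches n b"
  have ne: "?S \<noteq> {}" using replicate_in_batches[OF n] by blast
  define A where "A = {..K} - {k}"
  define Q where "Q = Pi_pmf A (replicate b 0) (\<lambda>_. pmf_of_set ?S)"
  have split: "batch_pmf n b K = map_pmf (\<lambda>(y, f). f(k := y)) (pair_pmf (pmf_of_set ?S) Q)"
  proof -
    have "{..K} = insert k A" "k \<notin> A" "finite A" using k by (auto simp: A_def)
    then show ?thesis unfolding batch_pmf_def Q_def by (simp only:) (rule Pi_pmf_insert)
  qed
  have fin_Q: "finite (set_pmf Q)" unfolding Q_def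
    by (rule finite_subset[OF set_Pi_pmf_subset']) (auto simp: A_def ne finite_batches)
  have fin_S: "finite (set_pmf (pmf_of_set ?S))" using ne by (simp add: finite_batches)
  have E: "measure_pmf.expectation (batch_pmf n b K) h
         = measure_pmf.expectation Q (\<lambda>f. (\<Sum>y\<in>?S. h (f(k := y))) / real (card ?S))" for h :: "_ \<Rightarrow> real"
    unfolding split integral_map_pmf
    by (subst expectation_pair_pmf_iterated[OF fin_S fin_Q]) (simp add: integral_pmf_of_set[OF ne finite_batches])
  have "real (card ?S) \<noteq> 0" using ne finite_batches by auto
  then show ?thesis by (simp only: E) simp
qed

lemma card_epoch_predecessors:
  assumes T: "0 < T"
  shows "card {k\<in>{..K}. j \<in> {T * (k div T)..<k}} \<le> T - 1"
proof -
  have "{k\<in>{..K}. j \<in> {T * (k div T)..<k}} \<subseteq> {Suc j..<T * (j div T) + T}"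
  proof
    fix k assume "k \<in> {k\<in>{..K}. j \<in> {T * (k div T)..<k}}"
    then have jk: "T * (k div T) \<le> j" "j < k" by auto
    have "k div T \<le> j div T"
      using div_le_mono[OF jk(1), of T] T by simp
    moreover have "k < T * (k div T) + T"
      using T by (metis div_mult_mod_eq mod_less_divisor nat_add_left_cancel_less mult.commute)
    ultimately have "k < T * (j div T) + T"
      using mult_le_mono2[of "k div T" "j div T" T] by linarith
    with jk show "k \<in> {Suc j..<T * (j div T) + T}" by auto
  qed
  then have "card {k\<in>{..K}. j \<in> {T * (k div T)..<k}} \<le> T * (j div T) + T - Suc j"
    using card_mono[of "{Suc j..<T * (j div T) + T}"] by simp
  also have "\<dots> \<le> T - 1"
  proof -
    have "T * (j div T) \<le> j" by (metis div_times_less_eq_dividend mult.commute)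
    then show ?thesis by linarith
  qed
  finally show ?thesis .
qed

lemma sum_epoch_prefixes_le:
  fixes w :: "nat \<Rightarrow> real"
  assumes w: "\<forall>j. 0 \<le> w j" and T: "0 < T"
  shows "(\<Sum>k\<le>K. \<Sum>j\<in>{T * (k div T)..<k}. w j) \<le> real (T - 1) * (\<Sum>j\<le>K. w j)"
proof -
  let ?P = "\<lambda>k j. j \<in> {T * (k div T)..<k}"
  have "(\<Sum>k\<le>K. \<Sum>j\<in>{T * (k div T)..<k}. w j) = (\<Sum>k\<le>K. \<Sum>j\<le>K. if ?P k j then w j else 0)"
  proof (rule sum.cong[OF refl])
    fix k assume "k \<in> {..K}"
    then have "{T * (k div T)..<k} = {..K} \<inter> {T * (k div T)..<k}" by auto
    then show "(\<Sum>j\<in>{T * (k div T)..<k}. w j) = (\<Sum>j\<le>K. if ?P k j then w j else 0)"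
      by (metis (no_types) finite_atMost sum.inter_restrict)
  qed
  also have "\<dots> = (\<Sum>j\<le>K. real (card {k\<in>{..K}. ?P k j}) * w j)"
    by (subst sum.swap) (simp add: sum.inter_filter[symmetric])
  also have "\<dots> \<le> (\<Sum>j\<le>K. real (T - 1) * w j)"
    using card_epoch_predecessors[OF T] w by (intro sum_mono mult_right_mono) auto
  finally show ?thesis by (simp add: sum_distrib_left)
qed

lemma epochwise_constant_mono_le:
  fixes \<alpha> :: "nat \<Rightarrow> real"
  assumes "mono \<alpha>" "\<forall>r j. 1 \<le> j \<and> j < T \<longrightarrow> \<alpha> (r * T + j) = \<alpha> (r * T)"
    and "K = r0 * T + j0" "j0 < T" "k \<le> K"
  shows "\<alpha> k \<le> \<alpha> (r0 * T)"
proof -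
  have "\<alpha> K = \<alpha> (r0 * T)" using assms(2-4) by (cases "j0 = 0") auto
  with assms(1,5) show ?thesis by (metis monoD)
qed

section \<open>The LCSVRG iteration\<close>

locale lcsvrg_run =
  fixes f :: "nat \<Rightarrow> 'a::real_inner \<Rightarrow> real" and gradf :: "nat \<Rightarrow> 'a \<Rightarrow> 'a"
    and chi :: "nat \<Rightarrow> 'a \<Rightarrow> ereal" and Lc :: "nat \<Rightarrow> real" and L0 :: real and m :: nat
    and eta :: "nat \<Rightarrow> real"
    and F :: "'a \<Rightarrow> 'b \<Rightarrow> real" and gradF :: "'a \<Rightarrow> 'b \<Rightarrow> 'a" and xi :: "nat \<Rightarrow> 'b" and n :: nat
    and T b :: nat and \<gamma> \<beta> B :: real
    and x :: "nat \<Rightarrow> (nat \<Rightarrow> nat list) \<Rightarrow> 'a" and x0 :: 'a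
    and G :: "nat \<Rightarrow> (nat \<Rightarrow> nat list) \<Rightarrow> 'a"
    and lam :: "nat \<Rightarrow> (nat \<Rightarrow> nat list) \<Rightarrow> nat \<Rightarrow> real"
    and etak :: "nat \<Rightarrow> nat \<Rightarrow> real"
  assumes n_pos: "0 < n"
    and F_deriv: "\<forall>j<n. \<forall>y. ((\<lambda>z. F z (xi j)) has_derivative (\<lambda>h. gradF y (xi j) \<bullet> h)) (at y)"
    and F_lip: "\<forall>j<n. \<forall>y z. norm (gradF y (xi j) - gradF z (xi j)) \<le> L0 * norm (y - z)"
    and f0_eq: "f 0 = (\<lambda>y. (\<Sum>j<n. F y (xi j)) / real n)"
    and gradf0_eq: "gradf 0 = (\<lambda>y. (1 / real n) *\<^sub>R (\<Sum>j<n. gradF y (xi j)))"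
    and f_deriv: "\<forall>i\<in>{1..m}. \<forall>y. (f i has_derivative (\<lambda>h. gradf i y \<bullet> h)) (at y)"
    and f_lip: "\<forall>i\<in>{1..m}. \<forall>y z. norm (gradf i y - gradf i z) \<le> Lc i * norm (y - z)"
    and Lc_nonneg: "\<forall>i\<in>{1..m}. 0 \<le> Lc i"
    and chi0_proper: "proper_fun (chi 0)" and chi0_convex: "econvex (chi 0)"
    and chi: "\<forall>i\<in>{1..m}. proper_fun (chi i) \<and> econvex (chi i) \<and> edom (chi 0) \<subseteq> edom (chi i)"
    and L0_pos: "0 < L0" and T_pos: "0 < T" and b_ge: "real b \<ge> 2 * real T"
    and gamma_pos: "0 < \<gamma>" and beta_pos: "0 < \<beta>" and B_pos: "0 < B"
    and x0_dom: "x0 \<in> edom (chi 0)"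
    and x_init: "\<forall>\<omega>. x 0 \<omega> = x0"
    and eta0: "\<forall>i\<in>{1..m}. ereal (f i x0) + chi i x0 < ereal (etak 0 i) \<and> etak 0 i < eta i"
    and eta_step: "\<forall>k. \<forall>i\<in>{1..m}. etak k i < etak (Suc k) i \<and> etak (Suc k) i < eta i"
    and G_rec_all: "\<forall>\<omega>. (\<forall>k. \<omega> k \<in> batches n b) \<longrightarrow> (\<forall>k.
        G k \<omega> = (if T dvd k then gradf 0 (x k \<omega>)
                  else (1 / real b) *\<^sub>R (\<Sum>j\<leftarrow>\<omega> k. gradF (x k \<omega>) (xi j) - gradF (x (k - 1) \<omega>) (xi j))
                       + G (k - 1) \<omega>))"
    and x_rec_all: "\<forall>\<omega>. (\<forall>k. \<omega> k \<in> batches n b) \<longrightarrow> (\<forall>k.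
        is_constr_min m (lcsvrg_obj (G k \<omega>) \<gamma> (x k \<omega>) (chi 0))
          (lcsvrg_con f gradf Lc chi (x k \<omega>)) (etak k) (x (Suc k) \<omega>))"
    and lam_kkt_all: "\<forall>\<omega>. (\<forall>k. \<omega> k \<in> batches n b) \<longrightarrow> (\<forall>k.
        (\<forall>i\<in>{1..m}. 0 \<le> lam (Suc k) \<omega> i) \<and>
        0 \<in> lag_set m
              (comp_subdiff (G k \<omega> + \<gamma> *\<^sub>R (x (Suc k) \<omega> - x k \<omega>)) (chi 0) (x (Suc k) \<omega>))
              (\<lambda>i. comp_subdiff (gradf i (x k \<omega>) + Lc i *\<^sub>R (x (Suc k) \<omega> - x k \<omega>)) (chi i) (x (Suc k) \<omega>))
              (lam (Suc k) \<omega>) \<and>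
        (\<forall>i\<in>{1..m}. lam (Suc k) \<omega> i *
            (real_of_ereal (lcsvrg_con f gradf Lc chi (x k \<omega>) i (x (Suc k) \<omega>)) - etak k i) = 0))"
    and lam_bound_all: "\<forall>\<omega>. (\<forall>k. \<omega> k \<in> batches n b) \<longrightarrow> (\<forall>k. L2_set (lam (Suc k) \<omega>) {1..m} \<le> B)"
begin

abbreviation expect :: "nat \<Rightarrow> ((nat \<Rightarrow> nat list) \<Rightarrow> real) \<Rightarrow> real" where
  "expect K g \<equiv> measure_pmf.expectation (batch_pmf n b K) g"

definition psi0 :: "'a \<Rightarrow> real" where
  "psi0 y = f 0 y + real_of_ereal (chi 0 y)"

definition grad_err :: "nat \<Rightarrow> (nat \<Rightarrow> nat list) \<Rightarrow> real" where
  "grad_err k \<omega> = (norm (G k \<omega> - gradf 0 (x k \<omega>)))\<^sup>2"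

definition step_sq :: "nat \<Rightarrow> (nat \<Rightarrow> nat list) \<Rightarrow> real" where
  "step_sq k \<omega> = (norm (x (Suc k) \<omega> - x k \<omega>))\<^sup>2"

definition feasible_set :: "'a set" where
  "feasible_set = {y \<in> edom (chi 0). \<forall>i\<in>{1..m}. ereal (f i y) + chi i y \<le> ereal (eta i)}"

lemma G_rec: "\<omega> \<in> batch_paths n b \<Longrightarrow>
    G k \<omega> = (if T dvd k then gradf 0 (x k \<omega>)
              else (1 / real b) *\<^sub>R (\<Sum>j\<leftarrow>\<omega> k. gradF (x k \<omega>) (xi j) - gradF (x (k - 1) \<omega>) (xi j))
                   + G (k - 1) \<omega>)"
  using G_rec_all unfolding batch_paths_def by blast

lemma x_rec: "\<omega> \<in> batch_paths n b \<Longrightarrow>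
    is_constr_min m (lcsvrg_obj (G k \<omega>) \<gamma> (x k \<omega>) (chi 0))
      (lcsvrg_con f gradf Lc chi (x k \<omega>)) (etak k) (x (Suc k) \<omega>)"
  using x_rec_all unfolding batch_paths_def by blast

lemma L0_nonneg: "0 \<le> L0"
  using L0_pos by simp

lemma B_nonneg: "0 \<le> B"
  using B_pos by simp

lemma b_pos: "0 < b"
  using b_ge T_pos by linarith

lemma f_taylor:
  "i \<in> {1..m} \<Longrightarrow> \<bar>f i y - f i z - gradf i z \<bullet> (y - z)\<bar> \<le> Lc i / 2 * (norm (y - z))\<^sup>2"
  using f_deriv f_lip by (intro lipschitz_gradient_linearization_bound) auto

lemma gradf0_lip: "norm (gradf 0 y - gradf 0 z) \<le> L0 * norm (y - z)"
proof -
  have "norm (gradf 0 y - gradf 0 z) = (1 / real n) * norm (\<Sum>j<n. gradF y (xi j) - gradF z (xi j))"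
    using n_pos by (simp add: gradf0_eq sum_subtractf flip: scaleR_diff_right)
  also have "\<dots> \<le> (1 / real n) * (\<Sum>j<n. L0 * norm (y - z))"
    using F_lip by (intro mult_left_mono order_trans[OF norm_sum sum_mono]) auto
  also have "\<dots> = L0 * norm (y - z)" using n_pos by simp
  finally show ?thesis .
qed

lemma f0_taylor: "\<bar>f 0 y - f 0 z - gradf 0 z \<bullet> (y - z)\<bar> \<le> L0 / 2 * (norm (y - z))\<^sup>2"
proof (rule lipschitz_gradient_linearization_bound[OF _ gradf0_lip])
  fix y
  have "((\<lambda>y. (\<Sum>j<n. F y (xi j)) / real n) has_derivative (\<lambda>h. (\<Sum>j<n. gradF y (xi j) \<bullet> h) / real n)) (at y)"
    using F_deriv n_pos by (auto intro!: derivative_eq_intros)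
  then show "(f 0 has_derivative (\<lambda>h. gradf 0 y \<bullet> h)) (at y)"
    by (simp add: f0_eq gradf0_eq inner_sum_left)
qed

lemma etak_lt: "i \<in> {1..m} \<Longrightarrow> etak k i < eta i"
  using eta0 eta_step by (cases k) auto

lemma step:
  assumes "\<omega> \<in> batch_paths n b"
  shows "lcsvrg_step f gradf chi Lc L0 m (x k \<omega>) (x (Suc k) \<omega>) (G k \<omega>) \<gamma> B (etak k) (lam (Suc k) \<omega>)"
  using chi0_proper chi Lc_nonneg f0_taylor f_taylor gradf0_lip f_lip x_rec[OF assms]
    lam_kkt_all lam_bound_all assms
  unfolding batch_paths_def by unfold_locales auto

lemma iterate_feasible:
  assumes \<omega>: "\<omega> \<in> batch_paths n b"
  shows "x k \<omega> \<in> edom (chi 0) \<and> (\<forall>i\<in>{1..m}. f i (x k \<omega>) + real_of_ereal (chi i (x k \<omega>)) \<le> etak k i)"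
proof (induction k)
  case 0
  have "f i x0 + real_of_ereal (chi i x0) \<le> etak 0 i" if i: "i \<in> {1..m}" for i
  proof -
    have "chi i x0 = ereal (real_of_ereal (chi i x0))"
      using chi i x0_dom by (intro proper_fun_finite) (auto simp: edom_def)
    then show ?thesis
      using eta0 i by (metis less_eq_ereal_def order_less_imp_le plus_ereal.simps(1) ereal_less_eq(3))
  qed
  then show ?case using x_init x0_dom by simp
next
  case (Suc k)
  interpret lcsvrg_step f gradf chi Lc L0 m "x k \<omega>" "x (Suc k) \<omega>" "G k \<omega>" \<gamma> B "etak k" "lam (Suc k) \<omega>"
    by (rule step[OF \<omega>])
  show ?case
    using next_dom next_feasible eta_step by (meson order_trans order_less_imp_le)
qed

lemma step_feasible:
  assumes "\<omega> \<in> batch_paths n b"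
  shows "lcsvrg_step_feasible f gradf chi Lc L0 m (x k \<omega>) (x (Suc k) \<omega>) (G k \<omega>) \<gamma> B (etak k) (lam (Suc k) \<omega>)"
  using step[OF assms] iterate_feasible[OF assms]
  by (auto simp: lcsvrg_step_feasible_def lcsvrg_step_feasible_axioms_def)

lemma iterate_in_feasible_set:
  assumes \<omega>: "\<omega> \<in> batch_paths n b"
  shows "x k \<omega> \<in> feasible_set"
proof -
  have dom: "x k \<omega> \<in> edom (chi 0)" using iterate_feasible[OF \<omega>] by blast
  have "ereal (f i (x k \<omega>)) + chi i (x k \<omega>) \<le> ereal (eta i)" if i: "i \<in> {1..m}" for i
  proof -
    have "chi i (x k \<omega>) = ereal (real_of_ereal (chi i (x k \<omega>)))"
      using chi i dom by (intro proper_fun_finite) (auto simp: edom_def)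
    moreover have "f i (x k \<omega>) + real_of_ereal (chi i (x k \<omega>)) \<le> eta i"
      using iterate_feasible[OF \<omega>, of k] etak_lt[OF i, of k] i by (meson order_trans order_less_imp_le)
    ultimately show ?thesis by (metis plus_ereal.simps(1) ereal_less_eq(3))
  qed
  with dom show ?thesis by (simp add: feasible_set_def)
qed

lemma x0_feasible: "x0 \<in> feasible_set"
  using iterate_in_feasible_set[of "\<lambda>_. replicate b 0" 0] x_init n_pos
  by (simp add: batch_paths_def replicate_in_batches)

lemma ereal_psi0: "y \<in> edom (chi 0) \<Longrightarrow> ereal (f 0 y) + chi 0 y = ereal (psi0 y)"
  using chi0_proper by (cases "chi 0 y") (auto simp: psi0_def edom_def proper_fun_def)

lemma Inf_le_psi0:
  assumes "(INF y\<in>feasible_set. ereal (f 0 y) + chi 0 y) = ereal c" "y \<in> feasible_set"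
  shows "c \<le> psi0 y"
proof -
  have "ereal c \<le> ereal (f 0 y) + chi 0 y" using assms by (metis INF_lower)
  then show ?thesis using assms(2) by (simp add: ereal_psi0 feasible_set_def)
qed

lemma iterates_adapted:
  assumes \<omega>: "\<omega> \<in> batch_paths n b" and \<omega>': "\<omega>' \<in> batch_paths n b"
  shows "((\<forall>i<k. \<omega> i = \<omega>' i) \<longrightarrow> x k \<omega> = x k \<omega>') \<and> ((\<forall>i\<le>k. \<omega> i = \<omega>' i) \<longrightarrow> G k \<omega> = G k \<omega>')"
proof (induction k)
  case 0
  show ?case using G_rec[OF \<omega>, of 0] G_rec[OF \<omega>', of 0] x_init by simp
next
  case (Suc k)
  have x_eq: "x (Suc k) \<omega> = x (Suc k) \<omega>'" if agree: "\<forall>i<Suc k. \<omega> i = \<omega>' i"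
  proof -
    have eqs: "x k \<omega>' = x k \<omega>" "G k \<omega>' = G k \<omega>" using Suc.IH agree by auto
    have "is_constr_min m (lcsvrg_obj (G k \<omega>) \<gamma> (x k \<omega>) (chi 0))
        (lcsvrg_con f gradf Lc chi (x k \<omega>)) (etak k) (x (Suc k) \<omega>')"
      using x_rec[OF \<omega>', of k] unfolding eqs .
    moreover have "chi 0 (x (Suc k) \<omega>) < \<infinity>"
      using iterate_feasible[OF \<omega>, of "Suc k"] by (simp add: edom_def)
    ultimately show ?thesis
      using chi Lc_nonneg
      by (intro lcsvrg_subproblem_min_unique[OF gamma_pos chi0_convex chi0_proper _ x_rec[OF \<omega>]]) auto
  qed
  moreover have "G (Suc k) \<omega> = G (Suc k) \<omega>'" if agree: "\<forall>i\<le>Suc k. \<omega> i = \<omega>' i"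
  proof -
    have "x (Suc k) \<omega> = x (Suc k) \<omega>'" "x k \<omega> = x k \<omega>'" "G k \<omega> = G k \<omega>'" "\<omega> (Suc k) = \<omega>' (Suc k)"
      using x_eq Suc.IH agree by auto
    then show ?thesis
      unfolding G_rec[OF \<omega>, of "Suc k"] G_rec[OF \<omega>', of "Suc k"] by simp
  qed
  ultimately show ?case by auto
qed

lemma grad_err_epoch_start: "\<omega> \<in> batch_paths n b \<Longrightarrow> T dvd k \<Longrightarrow> grad_err k \<omega> = 0"
  unfolding grad_err_def by (subst G_rec) auto

text \<open>Within an epoch the estimator error is a martingale: resampling the \<open>k\<close>-th batch leaves
  \<open>x k\<close>, \<open>x (k - 1)\<close> and \<open>G (k - 1)\<close> unchanged.\<close>

lemma resampled_grad_err_le: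
  assumes w: "w \<in> batch_paths n b" and k: "\<not> T dvd k"
  shows "(\<Sum>s\<in>batches n b. grad_err k (w(k := s))) / real (card (batches n b))
      \<le> grad_err (k - 1) w + L0\<^sup>2 / real b * step_sq (k - 1) w"
proof -
  have k1: "Suc (k - 1) = k" using k by (cases k) auto
  define u where "u = (\<lambda>j. gradF (x k w) (xi j) - gradF (x (k - 1) w) (xi j))"
  define a where "a = G (k - 1) w - gradf 0 (x (k - 1) w)"
  have "grad_err k (w(k := s))
      = (norm (a + (1 / real b) *\<^sub>R (\<Sum>j\<leftarrow>s. u j) - (1 / real n) *\<^sub>R (\<Sum>j<n. u j)))\<^sup>2"
    if s: "s \<in> batches n b" for s
  proof -
    have ws: "w(k := s) \<in> batch_paths n b" using w s by (auto simp: batch_paths_def)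
    have "x k (w(k := s)) = x k w" "x (k - 1) (w(k := s)) = x (k - 1) w"
      "G (k - 1) (w(k := s)) = G (k - 1) w"
      using iterates_adapted[OF ws w, of k] iterates_adapted[OF ws w, of "k - 1"] k1 by auto
    then have "G k (w(k := s)) - gradf 0 (x k (w(k := s)))
        = a + (1 / real b) *\<^sub>R (\<Sum>j\<leftarrow>s. u j) - (gradf 0 (x k w) - gradf 0 (x (k - 1) w))"
      using k by (simp add: G_rec[OF ws, of k] a_def u_def algebra_simps)
    also have "gradf 0 (x k w) - gradf 0 (x (k - 1) w) = (1 / real n) *\<^sub>R (\<Sum>j<n. u j)"
      by (simp add: gradf0_eq u_def sum_subtractf scaleR_diff_right)
    finally show ?thesis by (simp only: grad_err_def)
  qed
  then have "(\<Sum>s\<in>batches n b. grad_err k (w(k := s))) / real (card (batches n b))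
      = (\<Sum>s\<in>batches n b. (norm (a + (1 / real b) *\<^sub>R (\<Sum>j\<leftarrow>s. u j) - (1 / real n) *\<^sub>R (\<Sum>j<n. u j)))\<^sup>2)
        / real (card (batches n b))"
    by simp
  also have "\<dots> \<le> (norm a)\<^sup>2 + (L0 * norm (x k w - x (k - 1) w))\<^sup>2 / real b"
    using F_lip by (intro minibatch_variance_bound n_pos b_pos) (auto simp: u_def)
  also have "\<dots> = grad_err (k - 1) w + L0\<^sup>2 / real b * step_sq (k - 1) w"
    using k1 by (simp add: grad_err_def step_sq_def a_def power_mult_distrib)
  finally show ?thesis .
qed

lemma expect_nonneg: "(\<And>\<omega>. 0 \<le> g \<omega>) \<Longrightarrow> 0 \<le> expect K g"
  by (simp add: integral_nonneg_AE)

lemma expect_mono: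
  "(\<And>\<omega>. \<omega> \<in> batch_paths n b \<Longrightarrow> g \<omega> \<le> h \<omega>) \<Longrightarrow> expect K g \<le> expect K h"
  using set_batch_pmf_subset_batch_paths[OF n_pos]
  by (intro expectation_finite_mono finite_set_batch_pmf n_pos) auto

lemma expected_grad_err_step:
  assumes "k \<le> K" "\<not> T dvd k"
  shows "expect K (grad_err k) \<le> expect K (grad_err (k - 1)) + L0\<^sup>2 / real b * expect K (step_sq (k - 1))"
proof -
  have "expect K (grad_err k)
      = expect K (\<lambda>w. (\<Sum>s\<in>batches n b. grad_err k (w(k := s))) / real (card (batches n b)))"
    by (rule expectation_batch_pmf_resample[OF n_pos assms(1)])
  also have "\<dots> \<le> expect K (\<lambda>\<omega>. grad_err (k - 1) \<omega> + L0\<^sup>2 / real b * step_sq (k - 1) \<omega>)"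
    using resampled_grad_err_le assms(2) by (intro expect_mono) auto
  also have "\<dots> = expect K (grad_err (k - 1)) + L0\<^sup>2 / real b * expect K (step_sq (k - 1))"
    by (simp add: expectation_finite_add[OF finite_set_batch_pmf[OF n_pos]])
  finally show ?thesis .
qed

lemma expected_grad_err_le_epoch_steps:
  "k \<le> K \<Longrightarrow> expect K (grad_err k) \<le> L0\<^sup>2 / real b * (\<Sum>j\<in>{T * (k div T)..<k}. expect K (step_sq j))"
proof (induction k)
  case 0
  have "expect K (grad_err 0) \<le> expect K (\<lambda>_. 0)"
    using grad_err_epoch_start by (intro expect_mono) auto
  then show ?case by simp
next
  case (Suc k)
  show ?case
  proof (cases "T dvd Suc k")
    case True
    have "expect K (grad_err (Suc k)) \<le> expect K (\<lambda>_. 0)"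
      using grad_err_epoch_start True by (intro expect_mono) auto
    moreover have "0 \<le> L0\<^sup>2 / real b * (\<Sum>j\<in>{T * (Suc k div T)..<Suc k}. expect K (step_sq j))"
      by (intro mult_nonneg_nonneg sum_nonneg expect_nonneg) (auto simp: step_sq_def)
    ultimately show ?thesis by simp
  next
    case False
    have "Suc k div T = k div T" using False by (simp add: div_Suc dvd_eq_mod_eq_0)
    moreover have "T * (k div T) \<le> k" by (metis div_times_less_eq_dividend mult.commute)
    ultimately have epoch: "{T * (Suc k div T)..<Suc k} = insert k {T * (k div T)..<k}" by auto
    have "expect K (grad_err (Suc k)) \<le> expect K (grad_err k) + L0\<^sup>2 / real b * expect K (step_sq k)"
      using expected_grad_err_step[OF Suc.prems False] by simp
    also have "\<dots> \<le> L0\<^sup>2 / real b * (\<Sum>j\<in>{T * (Suc k div T)..<Suc k}. expect K (step_sq j))"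
      using Suc.IH Suc.prems unfolding epoch by (simp add: algebra_simps)
    finally show ?thesis .
  qed
qed

lemma sum_expected_grad_err_le:
  "(\<Sum>k\<le>K. expect K (grad_err k)) \<le> L0\<^sup>2 / real b * real (T - 1) * (\<Sum>k\<le>K. expect K (step_sq k))"
proof -
  have "(\<Sum>k\<le>K. expect K (grad_err k))
      \<le> (\<Sum>k\<le>K. L0\<^sup>2 / real b * (\<Sum>j\<in>{T * (k div T)..<k}. expect K (step_sq j)))"
    by (intro sum_mono expected_grad_err_le_epoch_steps) auto
  also have "\<dots> = L0\<^sup>2 / real b * (\<Sum>k\<le>K. \<Sum>j\<in>{T * (k div T)..<k}. expect K (step_sq j))"
    by (simp only: sum_distrib_left)
  also have "\<dots> \<le> L0\<^sup>2 / real b * (real (T - 1) * (\<Sum>k\<le>K. expect K (step_sq k)))"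
    by (intro mult_left_mono sum_epoch_prefixes_le T_pos allI expect_nonneg) (auto simp: step_sq_def)
  finally show ?thesis by simp
qed

definition L_tilde :: real where
  "L_tilde = (2 * \<gamma> - \<beta> - L0) / 2 - L0\<^sup>2 * (real T - 1) / (2 * \<beta> * real b)"

definition stationarity_res :: "nat \<Rightarrow> (nat \<Rightarrow> nat list) \<Rightarrow> real" where
  "stationarity_res k \<omega> = (norm_minus (lag_set m
     (comp_subdiff (gradf 0 (x (Suc k) \<omega>)) (chi 0) (x (Suc k) \<omega>))
     (\<lambda>i. comp_subdiff (gradf i (x (Suc k) \<omega>)) (chi i) (x (Suc k) \<omega>))
     (lam (Suc k) \<omega>)))\<^sup>2"

definition complementarity_res :: "nat \<Rightarrow> (nat \<Rightarrow> nat list) \<Rightarrow> real" where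
  "complementarity_res k \<omega> = (\<Sum>i\<in>{1..m}. lam (Suc k) \<omega> i *
     \<bar>real_of_ereal (ereal (f i (x (Suc k) \<omega>)) + chi i (x (Suc k) \<omega>)) - eta i\<bar>)"

lemma sufficient_decrease:
  assumes \<omega>: "\<omega> \<in> batch_paths n b"
  shows "psi0 (x (Suc k) \<omega>) \<le> psi0 (x k \<omega>) - (2 * \<gamma> - L0 - \<beta>) / 2 * step_sq k \<omega> + grad_err k \<omega> / (2 * \<beta>)"
proof -
  interpret lcsvrg_step_feasible f gradf chi Lc L0 m "x k \<omega>" "x (Suc k) \<omega>" "G k \<omega>" \<gamma> B "etak k" "lam (Suc k) \<omega>"
    by (rule step_feasible[OF \<omega>])
  have "(gradf 0 (x k \<omega>) - G k \<omega>) \<bullet> (x (Suc k) \<omega> - x k \<omega>)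
      \<le> norm (gradf 0 (x k \<omega>) - G k \<omega>) * norm (x (Suc k) \<omega> - x k \<omega>)"
    by (rule Cauchy_Schwarz_ineq2[THEN abs_le_D1])
  also have "\<dots> = norm (G k \<omega> - gradf 0 (x k \<omega>)) * norm (x (Suc k) \<omega> - x k \<omega>)"
    by (subst norm_minus_commute) (rule refl)
  also have "\<dots> \<le> grad_err k \<omega> / (2 * \<beta>) + \<beta> / 2 * step_sq k \<omega>"
    unfolding grad_err_def step_sq_def by (rule mult_le_weighted_squares[OF beta_pos])
  moreover have "(2 * \<gamma> - L0 - \<beta>) / 2 * step_sq k \<omega> = \<gamma> * step_sq k \<omega> - L0 / 2 * step_sq k \<omega> - \<beta> / 2 * step_sq k \<omega>"
    by (simp add: field_simps)
  ultimately show ?thesis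
    using inexact_descent unfolding psi0_def step_sq_def by linarith
qed

lemma telescoped_decrease:
  assumes \<omega>: "\<omega> \<in> batch_paths n b"
  shows "psi0 (x (Suc N) \<omega>) + (2 * \<gamma> - L0 - \<beta>) / 2 * (\<Sum>k\<le>N. step_sq k \<omega>)
      \<le> psi0 x0 + (\<Sum>k\<le>N. grad_err k \<omega>) / (2 * \<beta>)"
proof (induction N)
  case 0
  then show ?case using sufficient_decrease[OF \<omega>, of 0] x_init by simp
next
  case (Suc N)
  then show ?case
    using sufficient_decrease[OF \<omega>, of "Suc N"] by (simp add: algebra_simps add_divide_distrib)
qed

text \<open>\<open>L_tilde\<close> is the sufficient-decrease constant left after paying for the variance
  accumulated within an epoch.\<close>

lemma expected_path_length:
  assumes lower: "\<And>y. y \<in> feasible_set \<Longrightarrow> c \<le> psi0 y"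
  shows "L_tilde * (\<Sum>k\<le>K. expect K (step_sq k)) \<le> psi0 x0 - c"
proof -
  let ?a = "(2 * \<gamma> - L0 - \<beta>) / 2"
  let ?Sd = "\<Sum>k\<le>K. expect K (step_sq k)"
  let ?Se = "\<Sum>k\<le>K. expect K (grad_err k)"
  have fin: "finite (set_pmf (batch_pmf n b K))" by (rule finite_set_batch_pmf[OF n_pos])
  have "expect K (\<lambda>\<omega>. ?a * (\<Sum>k\<le>K. step_sq k \<omega>))
      \<le> expect K (\<lambda>\<omega>. (psi0 x0 - c) + (\<Sum>k\<le>K. grad_err k \<omega>) / (2 * \<beta>))"
  proof (rule expect_mono)
    fix \<omega> assume \<omega>: "\<omega> \<in> batch_paths n b"
    show "?a * (\<Sum>k\<le>K. step_sq k \<omega>) \<le> (psi0 x0 - c) + (\<Sum>k\<le>K. grad_err k \<omega>) / (2 * \<beta>)"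
      using telescoped_decrease[OF \<omega>, of K] lower[OF iterate_in_feasible_set[OF \<omega>, of "Suc K"]] by linarith
  qed
  then have "?a * ?Sd \<le> (psi0 x0 - c) + ?Se / (2 * \<beta>)"
    by (simp add: expectation_finite_add[OF fin] expectation_finite_sum[OF fin])
  moreover have "?Se / (2 * \<beta>) \<le> (L0\<^sup>2 / real b * real (T - 1) * ?Sd) / (2 * \<beta>)"
    using sum_expected_grad_err_le beta_pos by (intro divide_right_mono) auto
  moreover have "L_tilde * ?Sd = ?a * ?Sd - (L0\<^sup>2 / real b * real (T - 1) * ?Sd) / (2 * \<beta>)"
    using T_pos by (simp add: L_tilde_def field_simps)
  ultimately show ?thesis by linarith
qed

lemma expected_stationarity_res:
  "expect K (stationarity_res k)
    \<le> 2 * (\<gamma> + L0 + 2 * B * L2_set Lc {1..m})\<^sup>2 * expect K (step_sq k) + 2 * expect K (grad_err k)"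
proof -
  have "expect K (stationarity_res k)
      \<le> expect K (\<lambda>\<omega>. 2 * (\<gamma> + L0 + 2 * B * L2_set Lc {1..m})\<^sup>2 * step_sq k \<omega> + 2 * grad_err k \<omega>)"
  proof (rule expect_mono)
    fix \<omega> assume "\<omega> \<in> batch_paths n b"
    from lcsvrg_step.stationarity_bound[OF step[OF this]] gamma_pos L0_nonneg
    show "stationarity_res k \<omega> \<le> 2 * (\<gamma> + L0 + 2 * B * L2_set Lc {1..m})\<^sup>2 * step_sq k \<omega> + 2 * grad_err k \<omega>"
      by (simp add: stationarity_res_def step_sq_def grad_err_def)
  qed
  then show ?thesis by (simp add: expectation_finite_add[OF finite_set_batch_pmf[OF n_pos]])
qed

lemma expected_complementarity_res:
  "expect K (complementarity_res k)
    \<le> B * L2_set (\<lambda>i. eta i - etak k i) {1..m} + B * L2_set Lc {1..m} * expect K (step_sq k)"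
proof -
  have "expect K (complementarity_res k)
      \<le> expect K (\<lambda>\<omega>. B * L2_set (\<lambda>i. eta i - etak k i) {1..m} + B * L2_set Lc {1..m} * step_sq k \<omega>)"
  proof (rule expect_mono)
    fix \<omega> assume "\<omega> \<in> batch_paths n b"
    from lcsvrg_step.complementarity_bound[OF step[OF this]] etak_lt
    show "complementarity_res k \<omega> \<le> B * L2_set (\<lambda>i. eta i - etak k i) {1..m} + B * L2_set Lc {1..m} * step_sq k \<omega>"
      by (simp add: complementarity_res_def step_sq_def)
  qed
  then show ?thesis by (simp add: expectation_finite_add[OF finite_set_batch_pmf[OF n_pos]])
qed

lemma stationarity_constant_le:
  "2 * (\<gamma> + L0 + 2 * B * L2_set Lc {1..m})\<^sup>2 + 2 * (L0\<^sup>2 / real b * real (T - 1))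
    \<le> 8 * (\<gamma> + L0 + B * L2_set Lc {1..m})\<^sup>2"
proof -
  have "2 * real (T - 1) \<le> real b" using b_ge T_pos by simp
  then have "2 * real (T - 1) * L0\<^sup>2 \<le> real b * L0\<^sup>2" by (intro mult_right_mono) auto
  then have "2 * (L0\<^sup>2 / real b * real (T - 1)) \<le> L0\<^sup>2"
    using b_pos by (simp add: field_simps)
  also have "\<dots> \<le> (\<gamma> + L0)\<^sup>2" using gamma_pos L0_nonneg by (intro power_mono) auto
  finally show ?thesis
    using sq_add_double_le[of "\<gamma> + L0" "B * L2_set Lc {1..m}"] gamma_pos L0_nonneg B_nonneg
    by (simp add: mult.assoc)
qed

lemma weighted_stationarity_bound:
  assumes lower: "\<And>y. y \<in> feasible_set \<Longrightarrow> c \<le> psi0 y" and Lt: "0 < L_tilde"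
    and alpha: "\<And>k. 0 \<le> \<alpha> k" "\<And>k. k \<le> K \<Longrightarrow> \<alpha> k \<le> A"
  shows "(\<Sum>k\<le>K. \<alpha> k * expect K (stationarity_res k))
    \<le> 8 / L_tilde * (\<gamma> + L0 + B * L2_set Lc {1..m})\<^sup>2 * (psi0 x0 - c) * A"
proof -
  let ?C = "\<gamma> + L0 + 2 * B * L2_set Lc {1..m}"
  let ?Sd = "\<Sum>k\<le>K. expect K (step_sq k)"
  let ?Se = "\<Sum>k\<le>K. expect K (grad_err k)"
  have A: "0 \<le> A" using alpha[of 0] by fastforce
  have Sd: "0 \<le> ?Sd" by (intro sum_nonneg expect_nonneg) (simp add: step_sq_def)
  have "(\<Sum>k\<le>K. \<alpha> k * expect K (stationarity_res k))
      \<le> (\<Sum>k\<le>K. A * (2 * ?C\<^sup>2 * expect K (step_sq k) + 2 * expect K (grad_err k)))"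
  proof (rule sum_mono)
    fix k assume "k \<in> {..K}"
    moreover have "0 \<le> 2 * ?C\<^sup>2 * expect K (step_sq k) + 2 * expect K (grad_err k)"
      by (intro add_nonneg_nonneg mult_nonneg_nonneg expect_nonneg) (auto simp: step_sq_def grad_err_def)
    moreover have "0 \<le> expect K (stationarity_res k)"
      by (rule expect_nonneg) (simp add: stationarity_res_def)
    ultimately show "\<alpha> k * expect K (stationarity_res k) \<le> A * (2 * ?C\<^sup>2 * expect K (step_sq k) + 2 * expect K (grad_err k))"
      using expected_stationarity_res alpha A by (intro mult_mono) auto
  qed
  also have "\<dots> = A * (\<Sum>k\<le>K. 2 * ?C\<^sup>2 * expect K (step_sq k) + 2 * expect K (grad_err k))"
    by (simp add: sum_distrib_left)
  also have "\<dots> = A * (2 * ?C\<^sup>2 * ?Sd + 2 * ?Se)"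
    by (simp add: sum.distrib sum_distrib_left)
  also have "\<dots> \<le> A * (2 * ?C\<^sup>2 * ?Sd + 2 * (L0\<^sup>2 / real b * real (T - 1) * ?Sd))"
    using sum_expected_grad_err_le[of K] A by (intro mult_left_mono add_left_mono) auto
  also have "\<dots> = A * ((2 * ?C\<^sup>2 + 2 * (L0\<^sup>2 / real b * real (T - 1))) * ?Sd)"
    by (simp add: algebra_simps)
  also have "\<dots> \<le> A * (8 * (\<gamma> + L0 + B * L2_set Lc {1..m})\<^sup>2 * ?Sd)"
    using stationarity_constant_le A Sd by (intro mult_left_mono mult_right_mono) auto
  also have "\<dots> \<le> A * (8 * (\<gamma> + L0 + B * L2_set Lc {1..m})\<^sup>2 * ((psi0 x0 - c) / L_tilde))"
    using expected_path_length[OF lower] Lt A by (intro mult_left_mono) (auto simp: field_simps)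
  also have "\<dots> = 8 / L_tilde * (\<gamma> + L0 + B * L2_set Lc {1..m})\<^sup>2 * (psi0 x0 - c) * A"
    by (simp add: field_simps)
  finally show ?thesis .
qed

lemma weighted_complementarity_bound:
  assumes lower: "\<And>y. y \<in> feasible_set \<Longrightarrow> c \<le> psi0 y" and Lt: "0 < L_tilde"
    and alpha: "\<And>k. 0 \<le> \<alpha> k" "\<And>k. k \<le> K \<Longrightarrow> \<alpha> k \<le> A"
  shows "(\<Sum>k\<le>K. \<alpha> k * expect K (complementarity_res k))
    \<le> B * (\<Sum>k\<le>K. \<alpha> k * L2_set (\<lambda>i. eta i - etak k i) {1..m})
      + B / L_tilde * L2_set Lc {1..m} * (psi0 x0 - c) * A"
proof -
  let ?Sd = "\<Sum>k\<le>K. expect K (step_sq k)"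
  have A: "0 \<le> A" using alpha[of 0] by fastforce
  have BL: "0 \<le> B * L2_set Lc {1..m}" using B_nonneg by simp
  have "(\<Sum>k\<le>K. \<alpha> k * expect K (complementarity_res k))
      \<le> (\<Sum>k\<le>K. \<alpha> k * (B * L2_set (\<lambda>i. eta i - etak k i) {1..m}) + A * (B * L2_set Lc {1..m} * expect K (step_sq k)))"
  proof (rule sum_mono)
    fix k assume k: "k \<in> {..K}"
    have "\<alpha> k * expect K (complementarity_res k)
        \<le> \<alpha> k * (B * L2_set (\<lambda>i. eta i - etak k i) {1..m}) + \<alpha> k * (B * L2_set Lc {1..m} * expect K (step_sq k))"
      using expected_complementarity_res[of K k] alpha(1)[of k] by (simp add: mult_left_mono flip: distrib_left)
    also have "\<dots> \<le> \<alpha> k * (B * L2_set (\<lambda>i. eta i - etak k i) {1..m}) + A * (B * L2_set Lc {1..m} * expect K (step_sq k))"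
      using alpha(2) k B_nonneg by (intro add_left_mono mult_right_mono mult_nonneg_nonneg expect_nonneg) (auto simp: step_sq_def)
    finally show "\<alpha> k * expect K (complementarity_res k) \<le> \<dots>" .
  qed
  also have "\<dots> = B * (\<Sum>k\<le>K. \<alpha> k * L2_set (\<lambda>i. eta i - etak k i) {1..m}) + A * B * L2_set Lc {1..m} * ?Sd"
    by (simp add: sum.distrib sum_distrib_left algebra_simps)
  also have "\<dots> \<le> B * (\<Sum>k\<le>K. \<alpha> k * L2_set (\<lambda>i. eta i - etak k i) {1..m}) + A * B * L2_set Lc {1..m} * ((psi0 x0 - c) / L_tilde)"
    using expected_path_length[OF lower] Lt A BL by (intro add_left_mono mult_left_mono) (auto simp: field_simps)
  also have "\<dots> = B * (\<Sum>k\<le>K. \<alpha> k * L2_set (\<lambda>i. eta i - etak k i) {1..m})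
      + B / L_tilde * L2_set Lc {1..m} * (psi0 x0 - c) * A"
    by (simp add: field_simps)
  finally show ?thesis .
qed

end

theorem mainTheorem15:
  fixes f :: "nat \<Rightarrow> 'a::euclidean_space \<Rightarrow> real"
    and gradf :: "nat \<Rightarrow> 'a \<Rightarrow> 'a"
    and chi :: "nat \<Rightarrow> 'a \<Rightarrow> ereal"
    and Lc :: "nat \<Rightarrow> real" and L0 :: real and m :: nat
    and eta :: "nat \<Rightarrow> real"
    and F :: "'a \<Rightarrow> 'b \<Rightarrow> real" and gradF :: "'a \<Rightarrow> 'b \<Rightarrow> 'a"
    and xi :: "nat \<Rightarrow> 'b" and n :: nat
    and T b :: nat and \<gamma> \<beta> B :: real
    and x :: "nat \<Rightarrow> (nat \<Rightarrow> nat list) \<Rightarrow> 'a" and x0 :: 'a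
    and G :: "nat \<Rightarrow> (nat \<Rightarrow> nat list) \<Rightarrow> 'a"
    and lam :: "nat \<Rightarrow> (nat \<Rightarrow> nat list) \<Rightarrow> nat \<Rightarrow> real"
    and etak :: "nat \<Rightarrow> nat \<Rightarrow> real"
    and \<alpha> :: "nat \<Rightarrow> real"
    and K r0 j0 :: nat
  defines "Feas \<equiv> {y \<in> edom (chi 0). \<forall>i\<in>{1..m}. ereal (f i y) + chi i y \<le> ereal (eta i)}"
  defines "psi0star \<equiv> Inf ((\<lambda>y. ereal (f 0 y) + chi 0 y) ` Feas)"
  defines "Lt \<equiv> (2 * \<gamma> - \<beta> - L0) / 2 - L0\<^sup>2 * (real T - 1) / (2 * \<beta> * real b)"
  defines "D \<equiv> sqrt ((real_of_ereal (ereal (f 0 x0) + chi 0 x0) - real_of_ereal psi0star) / L0)"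
  defines "normL \<equiv> L2_set Lc {1..m}"
  (* problem data *)
  assumes n_pos: "0 < n"
    and F_deriv: "\<forall>j<n. \<forall>y. ((\<lambda>z. F z (xi j)) has_derivative (\<lambda>h. gradF y (xi j) \<bullet> h)) (at y)"
    and F_lip: "\<forall>j<n. \<forall>y z. norm (gradF y (xi j) - gradF z (xi j)) \<le> L0 * norm (y - z)"
    and f0_def: "f 0 = (\<lambda>y. (\<Sum>j<n. F y (xi j)) / real n)"
    and gradf0_def: "gradf 0 = (\<lambda>y. (1 / real n) *\<^sub>R (\<Sum>j<n. gradF y (xi j)))"
    and f_deriv: "\<forall>i\<in>{1..m}. \<forall>y. (f i has_derivative (\<lambda>h. gradf i y \<bullet> h)) (at y)"
    and f_lip: "\<forall>i\<in>{1..m}. \<forall>y z. norm (gradf i y - gradf i z) \<le> Lc i * norm (y - z)"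
    and chi0: "proper_fun (chi 0)" "econvex (chi 0)" "elsc (chi 0)"
    and chii: "\<forall>i\<in>{1..m}. proper_fun (chi i) \<and> econvex (chi i) \<and>
                 edom (chi 0) \<subseteq> edom (chi i) \<and> continuous_on (edom (chi 0)) (chi i)"
    and feas: "Feas \<noteq> {}" "compact Feas"
    and opt_finite: "\<bar>psi0star\<bar> \<noteq> \<infinity>"
  (* parameters *)
    and L0_pos: "0 < L0" and T_pos: "0 < T" and b_ge: "real b \<ge> 2 * real T"
    and gamma_pos: "0 < \<gamma>"
    and beta: "0 < \<beta>" "\<beta> < 2 * \<gamma> - L0"
    and Lt_pos: "0 < Lt"
    and B_pos: "0 < B"
  (* initialization and level sequence *)
    and x0_dom: "x0 \<in> edom (chi 0)"
    and x_init: "\<forall>\<omega>. x 0 \<omega> = x0"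
    and eta0: "\<forall>i\<in>{1..m}. ereal (f i x0) + chi i x0 < ereal (etak 0 i) \<and> etak 0 i < eta i"
    and eta_step: "\<forall>k. \<forall>i\<in>{1..m}. etak k i < etak (Suc k) i \<and> etak (Suc k) i < eta i"
  (* algorithm, for every realization of the mini-batches *)
    and G_rec: "\<forall>\<omega>. (\<forall>k. \<omega> k \<in> batches n b) \<longrightarrow> (\<forall>k.
        G k \<omega> = (if T dvd k then gradf 0 (x k \<omega>)
                  else (1 / real b) *\<^sub>R (\<Sum>j\<leftarrow>\<omega> k. gradF (x k \<omega>) (xi j) - gradF (x (k - 1) \<omega>) (xi j))
                       + G (k - 1) \<omega>))"
    and x_rec: "\<forall>\<omega>. (\<forall>k. \<omega> k \<in> batches n b) \<longrightarrow> (\<forall>k.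
        is_constr_min m (lcsvrg_obj (G k \<omega>) \<gamma> (x k \<omega>) (chi 0))
          (lcsvrg_con f gradf Lc chi (x k \<omega>)) (etak k) (x (Suc k) \<omega>))"
    and lam_kkt: "\<forall>\<omega>. (\<forall>k. \<omega> k \<in> batches n b) \<longrightarrow> (\<forall>k.
        (\<forall>i\<in>{1..m}. 0 \<le> lam (Suc k) \<omega> i) \<and>
        0 \<in> lag_set m
              (comp_subdiff (G k \<omega> + \<gamma> *\<^sub>R (x (Suc k) \<omega> - x k \<omega>)) (chi 0) (x (Suc k) \<omega>))
              (\<lambda>i. comp_subdiff (gradf i (x k \<omega>) + Lc i *\<^sub>R (x (Suc k) \<omega> - x k \<omega>)) (chi i) (x (Suc k) \<omega>))
              (lam (Suc k) \<omega>) \<and>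
        (\<forall>i\<in>{1..m}. lam (Suc k) \<omega> i *
            (real_of_ereal (lcsvrg_con f gradf Lc chi (x k \<omega>) i (x (Suc k) \<omega>)) - etak k i) = 0))"
    and lam_bound: "\<forall>\<omega>. (\<forall>k. \<omega> k \<in> batches n b) \<longrightarrow> (\<forall>k. L2_set (lam (Suc k) \<omega>) {1..m} \<le> B)"
  (* weights *)
    and alpha_nonneg: "\<forall>k. 0 \<le> \<alpha> k" and alpha_mono: "mono \<alpha>"
    and alpha_epoch: "\<forall>r j. 1 \<le> j \<and> j < T \<longrightarrow> \<alpha> (r * T + j) = \<alpha> (r * T)"
    and K_split: "K = r0 * T + j0" "j0 < T"
  shows "((\<Sum>k\<le>K. \<alpha> k * measure_pmf.expectation (batch_pmf n b K)
            (\<lambda>\<omega>. (norm_minus (lag_set m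
                 (comp_subdiff (gradf 0 (x (Suc k) \<omega>)) (chi 0) (x (Suc k) \<omega>))
                 (\<lambda>i. comp_subdiff (gradf i (x (Suc k) \<omega>)) (chi i) (x (Suc k) \<omega>))
                 (lam (Suc k) \<omega>)))\<^sup>2))
         \<le> 8 / Lt * L0 * (\<gamma> + L0 + B * normL)\<^sup>2 * D\<^sup>2 * \<alpha> (r0 * T)) \<and>
         ((\<Sum>k\<le>K. \<alpha> k * measure_pmf.expectation (batch_pmf n b K)
            (\<lambda>\<omega>. \<Sum>i\<in>{1..m}. lam (Suc k) \<omega> i *
                 \<bar>real_of_ereal (ereal (f i (x (Suc k) \<omega>)) + chi i (x (Suc k) \<omega>)) - eta i\<bar>))
         \<le> B * (\<Sum>k\<le>K. \<alpha> k * L2_set (\<lambda>i. eta i - etak k i) {1..m})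
           + B / Lt * normL * L0 * D\<^sup>2 * \<alpha> (r0 * T))"
proof -
  have Lc_nonneg: "\<forall>i\<in>{1..m}. 0 \<le> Lc i"
    using f_lip lipschitz_const_nonneg by blast
  have chi: "\<forall>i\<in>{1..m}. proper_fun (chi i) \<and> econvex (chi i) \<and> edom (chi 0) \<subseteq> edom (chi i)"
    using chii by blast
  interpret run: lcsvrg_run f gradf chi Lc L0 m eta F gradF xi n T b \<gamma> \<beta> B x x0 G lam etak
    by unfold_locales (fact n_pos F_deriv F_lip f0_def gradf0_def f_deriv f_lip Lc_nonneg chi0 chi
      L0_pos T_pos b_ge gamma_pos beta B_pos x0_dom x_init eta0 eta_step G_rec x_rec lam_kkt lam_bound)+
  obtain c where c: "psi0star = ereal c"
    using opt_finite by (cases psi0star) auto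
  have lower: "c \<le> run.psi0 y" if "y \<in> run.feasible_set" for y
    using run.Inf_le_psi0 that c unfolding psi0star_def Feas_def run.feasible_set_def by blast
  have D2: "L0 * D\<^sup>2 = run.psi0 x0 - c"
    using lower[OF run.x0_feasible] L0_pos x0_dom by (simp add: D_def c run.ereal_psi0)
  have alpha_le: "\<alpha> k \<le> \<alpha> (r0 * T)" if "k \<le> K" for k
    using epochwise_constant_mono_le[OF alpha_mono alpha_epoch K_split that] .
  have "Lt = run.L_tilde" by (simp add: Lt_def run.L_tilde_def)
  then show ?thesis
    using run.weighted_stationarity_bound[OF lower _ _ alpha_le] run.weighted_complementarity_bound[OF lower _ _ alpha_le]
      Lt_pos alpha_nonneg
    unfolding run.stationarity_res_def run.complementarity_res_def normL_def D2[symmetric]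
    by (simp add: mult_ac)
qed

end
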